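(* Under the standing setup below, almost surely as $n\to\infty$, $$\sup_{x\in\mathcal L(t)}\left|\frac{K_h(\varphi_n(x))}{K_{n,h}(\varphi_n(x))}-1\right|\to0\qquad\text{and}\qquad\sup_{x\in\mathcal L(t)}\left\|D_x\!\left[\frac{K_h(\varphi_n(x))}{K_{n,h}(\varphi_n(x))}\right]\right\|\to0.$$
   Context: Standing setup. Let $X_1,X_2,\dots$ be i.i.d. random vectors in $\mathbb R^d$ with common law $\mu$ having a Lebesgue density $f$. For $s\in\mathbb R$ let $\mathcal L(s)=\{x\in\mathbb R^d: f(x)\ge s\}$, and for $a\le b$ let $\mathcal L_a^b=\{x: a\le f(x)\le b\}$. A level $t>0$ in the interior of the range of $f$ is fixed; $\mathcal L(t)$ is nonempty and compact. Assumption 1: (i) $f$ is of class $C^2$ on $\mathbb R^d$; (ii) $\|D_xf\|>0$ on $\{x: f(x)=t\}$; (iii) $f$, $D_xf$, $D_x^2f$ are uniformly bounded on $\mathbb R^d$. $B$ denotes the unit ball of $\mathbb R^d$ centered at $0$. Assumption 2: $k:\mathbb R^d\to\mathbb R_+$ satisfies (i) $k$ is $C^2$; (ii) the support of $k$ is $B$; (iii) $k$ is bounded from below on $B/2$ by a positive number; (iv) $k(-x)=k(x)$. For $h>0$, $k_h(u)=k(u/h)$. Fix $h>0$ and $\varepsilon_0>0$ such that $\mathcal L_{t-\varepsilon_0}^{t+\varepsilon_0}$ contains no critical point of $f$ and $\varepsilon_0/\alpha(\varepsilon_0)<h/2$, where $\alpha(\varepsilon_0)=\inf\{\|D_xf(x)\|: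 x\in\mathcal L_{t-\varepsilon_0}^t\}$. Let $(\varepsilon_n)$ be positive numbers with $\varepsilon_n\le\varepsilon_0$ and $\varepsilon_n\to0$. Let $(\varphi_n)$ be $C^1$ diffeomorphisms of $\mathbb R^d$ with $\varphi_n(\mathcal L(t))=\mathcal L(t-\varepsilon_n)$, $\sup_{x\in\mathcal L(t)}\|\varphi_n(x)-x\|\to0$ and $\sup_{x\in\mathcal L(t)}\|D_x\varphi_n(x)-I_d\|\to0$. Empirical objects. Let $\widehat f_n$ be a differentiable density estimate built from $X_1,\dots,X_n$; $\mathcal L_n(t)=\{x:\widehat f_n(x)\ge t\}$; $J(n)=\{j\in\{1,\dots,n\}:\widehat f_n(X_j)\ge t\}$, $j(n)=\#J(n)$, $\mathbb P_n^t=\frac1{j(n)}\sum_{j\in J(n)}\delta_{X_j}$. Let $\Omega_n=[\|\widehat f_n-f\|_\infty\le\varepsilon_n]\cap[\inf\{\|D_x\widehat f_n(x)\|: x\in\mathcal L_{t-\varepsilon_0}^{t+\varepsilon_0}\}\ge\frac12\|D_xf\|_\infty]$; it is assumed that $\mathbf 1_{\Omega_n}\to1$ almost surely. Set $K_{n,h}(x)=\int_{\mathcal L_n(t)}k_h(y-x)\,\mathbb P_n^t(dy)$. Limit objects. $\mu^t$ is the conditional law of $X_1$ given $X_1\in\mathcal L(t)$; $K_h(x)=\int_{\mathcal L(t)}k_h(y-x)\,\mu^t(dy)$. *)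

theory Defs
  imports "HOL-Probability.Probability"
begin

definition superlevel :: "('a \<Rightarrow> real) \<Rightarrow> real \<Rightarrow> 'a set" where
  "superlevel g s = {x. g x \<ge> s}"

definition band :: "('a \<Rightarrow> real) \<Rightarrow> real \<Rightarrow> real \<Rightarrow> 'a set" where
  "band g a b = {x. a \<le> g x \<and> g x \<le> b}"

definition C1_fun :: "('a::real_normed_vector \<Rightarrow> 'b::real_normed_vector) \<Rightarrow> bool" where
  "C1_fun g \<longleftrightarrow> (\<exists>g'. (\<forall>x. (g has_derivative blinfun_apply (g' x)) (at x)) \<and> continuous_on UNIV g')"

definition C2_fun :: "('a::real_normed_vector \<Rightarrow> 'b::real_normed_vector) \<Rightarrow> bool" where
  "C2_fun g \<longleftrightarrow> (\<exists>g' g''. (\<forall>x. (g has_derivative blinfun_apply (g' x)) (at x)) \<and>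
      (\<forall>x. (g' has_derivative blinfun_apply (g'' x)) (at x)) \<and> continuous_on UNIV g'')"

definition C1_diffeo :: "('a::real_normed_vector \<Rightarrow> 'a) \<Rightarrow> bool" where
  "C1_diffeo \<phi> \<longleftrightarrow> bij \<phi> \<and> C1_fun \<phi> \<and> C1_fun (inv \<phi>)"

definition kh :: "('a::real_normed_vector \<Rightarrow> real) \<Rightarrow> real \<Rightarrow> 'a \<Rightarrow> real" where
  "kh k h u = k (u /\<^sub>R h)"

text \<open>Limit object K_h(x) = \<integral>_{L(t)} k_h(y-x) \<mu>^t(dy), with \<mu>^t the conditional law of
  X_1 (here X 0) given X_1 \<in> L(t).\<close>
definition Kh_lim :: "'b measure \<Rightarrow> (nat \<Rightarrow> 'b \<Rightarrow> 'a::euclidean_space) \<Rightarrow> ('a \<Rightarrow> real)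
    \<Rightarrow> real \<Rightarrow> ('a \<Rightarrow> real) \<Rightarrow> real \<Rightarrow> 'a \<Rightarrow> real" where
  "Kh_lim M X f t k h x =
     integral\<^sup>L M (\<lambda>\<omega>. indicator (superlevel f t) (X 0 \<omega>) * kh k h (X 0 \<omega> - x))
     / measure M {\<omega> \<in> space M. X 0 \<omega> \<in> superlevel f t}"

text \<open>Index set J(n) (samples X 0 .. X (n-1) play the role of X_1 .. X_n).\<close>
definition Jn :: "(nat \<Rightarrow> 'b \<Rightarrow> 'a \<Rightarrow> real) \<Rightarrow> (nat \<Rightarrow> 'b \<Rightarrow> 'a) \<Rightarrow> real \<Rightarrow> nat \<Rightarrow> 'b \<Rightarrow> nat set" where
  "Jn fhat X t n \<omega> = {j. j < n \<and> fhat n \<omega> (X j \<omega>) \<ge> t}"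

definition Knh :: "(nat \<Rightarrow> 'b \<Rightarrow> 'a::euclidean_space \<Rightarrow> real) \<Rightarrow> (nat \<Rightarrow> 'b \<Rightarrow> 'a) \<Rightarrow> real
    \<Rightarrow> ('a \<Rightarrow> real) \<Rightarrow> real \<Rightarrow> nat \<Rightarrow> 'b \<Rightarrow> 'a \<Rightarrow> real" where
  "Knh fhat X t k h n \<omega> x =
     (\<Sum>j\<in>Jn fhat X t n \<omega>. indicator (superlevel (fhat n \<omega>) t) (X j \<omega>) * kh k h (X j \<omega> - x))
     / real (card (Jn fhat X t n \<omega>))"

definition Omega_n :: "(nat \<Rightarrow> 'b \<Rightarrow> 'a::euclidean_space \<Rightarrow> real) \<Rightarrow> ('a \<Rightarrow> real) \<Rightarrow> ('a \<Rightarrow> 'a \<Rightarrow>\<^sub>L real)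
    \<Rightarrow> real \<Rightarrow> real \<Rightarrow> (nat \<Rightarrow> real) \<Rightarrow> nat \<Rightarrow> 'b \<Rightarrow> bool" where
  "Omega_n fhat f Df t \<epsilon>0 \<epsilon> n \<omega> \<longleftrightarrow>
     (\<forall>x. \<bar>fhat n \<omega> x - f x\<bar> \<le> \<epsilon> n) \<and>
     (\<forall>x \<in> band f (t - \<epsilon>0) (t + \<epsilon>0).
        onorm (frechet_derivative (fhat n \<omega>) (at x)) \<ge> (1/2) * (SUP y. norm (Df y)))"

end

theory Submission
  imports Defs
begin

text \<open>
  Both \<open>K\<^sub>h\<close> and \<open>K\<^sub>n\<^sub>,\<^sub>h\<close> are means of the translated kernel \<open>y \<mapsto> k\<^sub>h(y - z)\<close>:
  \<open>K\<^sub>h(z)\<close> is its conditional expectation given \<open>X \<in> L(t)\<close>, and \<open>K\<^sub>n\<^sub>,\<^sub>h(z)\<close> its average over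
  the sample points in the estimated level set.  (1) As \<open>fhat\<^sub>n \<rightarrow> f\<close> uniformly, a sample point is
  classified differently by \<open>fhat\<^sub>n\<close> and \<open>f\<close> only inside a thin band around \<open>{f = t}\<close>; this
  boundary is Lebesgue-null because the gradient does not vanish on it, so misclassified points
  have vanishing frequency and the strong law of large numbers gives \<open>K\<^sub>n\<^sub>,\<^sub>h(z) \<rightarrow> K\<^sub>h(z)\<close> a.s.
  (2) Equicontinuity in \<open>z\<close> upgrades this to uniform convergence on compact sets, for \<open>k\<^sub>h\<close> and
  for its partial derivatives alike.  (3) \<open>K\<^sub>h\<close> is bounded below on a compact neighbourhood of
  \<open>L(t)\<close> that contains \<open>\<phi>\<^sub>n(L(t))\<close> for large \<open>n\<close>; the quotient rule and \<open>D\<phi>\<^sub>n \<rightarrow> id\<close> give both claims.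
\<close>

text \<open>A continuous function on a Euclidean space that vanishes outside a ball is
  uniformly continuous (Heine--Cantor on a slightly larger closed ball).\<close>

lemma uniformly_continuous_compact_support:
  fixes g :: "'a::euclidean_space \<Rightarrow> 'b::real_normed_vector"
  assumes cont: "continuous_on UNIV g" and vanish: "\<And>x. norm x > R \<Longrightarrow> g x = 0"
  shows "uniformly_continuous_on UNIV g"
  unfolding uniformly_continuous_on_def
proof (intro allI impI)
  fix e :: real assume e: "e > 0"
  define R' where "R' = max R 0 + 1"
  have "uniformly_continuous_on (cball 0 R') g"
    by (rule compact_uniformly_continuous) (auto intro: continuous_on_subset[OF cont])
  then obtain d where d: "d > 0"
    "\<forall>x\<in>cball 0 R'. \<forall>y\<in>cball 0 R'. dist y x < d \<longrightarrow> dist (g y) (g x) < e"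
    using e unfolding uniformly_continuous_on_def by metis
  show "\<exists>d>0. \<forall>x\<in>UNIV. \<forall>x'\<in>UNIV. dist x' x < d \<longrightarrow> dist (g x') (g x) < e"
  proof (intro exI[of _ "min d 1"] conjI ballI impI)
    fix x y :: 'a assume xy: "dist y x < min d 1"
    show "dist (g y) (g x) < e"
    proof (cases "x \<in> cball 0 R' \<and> y \<in> cball 0 R'")
      case True then show ?thesis using d xy by auto
    next
      case False
      have "norm x - norm y \<le> dist y x" "norm y - norm x \<le> dist y x"
        by (metis dist_commute dist_norm norm_triangle_ineq2)+
      then have "norm x > R \<and> norm y > R" using False xy unfolding R'_def by auto
      then show ?thesis using vanish e by auto
    qed
  qed (use d in auto)
qed

lemma bounded_compact_support:
  fixes g :: "'a::euclidean_space \<Rightarrow> 'b::real_normed_vector"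
  assumes cont: "continuous_on UNIV g" and vanish: "\<And>x. norm x > R \<Longrightarrow> g x = 0"
  shows "\<exists>B. \<forall>x. norm (g x) \<le> B"
proof -
  have "compact (g ` cball 0 R)"
    by (rule compact_continuous_image) (auto intro: continuous_on_subset[OF cont])
  then obtain B where B: "\<forall>y\<in>g ` cball 0 R. norm y \<le> B"
    using compact_imp_bounded bounded_iff by metis
  have "norm (g x) \<le> max B 0" for x
    using B vanish[of x] by (cases "norm x \<le> R") (auto simp: mem_cball_0 le_max_iff_disj)
  then show ?thesis by blast
qed

lemma uniformly_continuous_on_rescale:
  fixes \<psi> :: "'a::real_normed_vector \<Rightarrow> 'b::metric_space"
  assumes "uniformly_continuous_on UNIV \<psi>"
  shows "uniformly_continuous_on UNIV (\<lambda>u. \<psi> (u /\<^sub>R h))"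
proof (rule uniformly_continuous_on_compose[where g="\<lambda>u. u /\<^sub>R h" and f=\<psi>])
  show "uniformly_continuous_on UNIV (\<lambda>u::'a. u /\<^sub>R h)"
    by (rule bounded_linear.uniformly_continuous_on[OF bounded_linear_scaleR_right
          uniformly_continuous_on_id])
  show "uniformly_continuous_on ((\<lambda>u. u /\<^sub>R h) ` UNIV) \<psi>"
    using assms unfolding uniformly_continuous_on_def by blast
qed

lemma blinfun_basis_expansion:
  fixes A :: "'a::euclidean_space \<Rightarrow>\<^sub>L real"
  shows "A v = (\<Sum>b\<in>Basis. (v \<bullet> b) * A b)"
proof -
  have "A v = A (\<Sum>b\<in>Basis. (v \<bullet> b) *\<^sub>R b)" by (simp add: euclidean_representation)
  also have "\<dots> = (\<Sum>b\<in>Basis. (v \<bullet> b) * A b)"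
    by (simp add: blinfun.sum_right blinfun.scaleR_right)
  finally show ?thesis .
qed

lemma basis_sum_bound:
  fixes w :: "'a::euclidean_space" and g :: "'a \<Rightarrow> real" and B :: real
  assumes "\<And>b. b \<in> Basis \<Longrightarrow> \<bar>g b\<bar> \<le> B"
  shows "\<bar>\<Sum>b\<in>Basis. (w \<bullet> b) * g b\<bar> \<le> norm w * (real DIM('a) * B)"
proof -
  have "\<bar>\<Sum>b\<in>Basis. (w \<bullet> b) * g b\<bar> \<le> (\<Sum>b\<in>Basis. \<bar>(w \<bullet> b) * g b\<bar>)" by (rule sum_abs)
  also have "\<dots> \<le> (\<Sum>b\<in>(Basis::'a set). norm w * B)"
  proof (rule sum_mono)
    fix b :: 'a assume b: "b \<in> Basis"
    show "\<bar>(w \<bullet> b) * g b\<bar> \<le> norm w * B"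
      unfolding abs_mult using Basis_le_norm[OF b] assms[OF b] by (intro mult_mono) auto
  qed
  also have "\<dots> = norm w * (real DIM('a) * B)" by simp
  finally show ?thesis .
qed

text \<open>If the partial derivative \<open>Df x b\<close> never vanishes on a convex set \<open>U\<close>, then
  every line in direction \<open>b\<close> meets a level set of \<open>f\<close> inside \<open>U\<close> at most once (Rolle).\<close>

lemma level_set_line_unique:
  fixes f :: "'a::real_normed_vector \<Rightarrow> real"
  assumes fD: "\<And>x. (f has_derivative blinfun_apply (Df x)) (at x)"
    and U: "convex U" and nz: "\<And>x. x \<in> U \<Longrightarrow> Df x b \<noteq> 0"
    and x: "x \<in> U" "x + s *\<^sub>R b \<in> U" and eq: "f (x + s *\<^sub>R b) = f x"
  shows "s = 0"
proof (rule ccontr)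
  assume "s \<noteq> 0"
  define \<gamma> where "\<gamma> \<tau> = x + \<tau> *\<^sub>R (s *\<^sub>R b)" for \<tau>
  have \<gamma>U: "\<gamma> \<tau> \<in> U" if "0 \<le> \<tau>" "\<tau> \<le> 1" for \<tau>
  proof -
    have "\<gamma> \<tau> = (1 - \<tau>) *\<^sub>R x + \<tau> *\<^sub>R (x + s *\<^sub>R b)" unfolding \<gamma>_def by (simp add: algebra_simps)
    then show ?thesis using convexD_alt[OF U x] that by simp
  qed
  have deriv: "((\<lambda>\<tau>. f (\<gamma> \<tau>)) has_derivative (\<lambda>v. Df (\<gamma> \<tau>) (v *\<^sub>R (s *\<^sub>R b)))) (at \<tau>)" for \<tau>
    unfolding \<gamma>_def
    by (rule has_derivative_compose[OF _ fD]) (auto intro!: derivative_eq_intros)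
  have "continuous_on {0..1} (\<lambda>\<tau>. f (\<gamma> \<tau>))"
    using deriv has_derivative_continuous continuous_at_imp_continuous_on by blast
  moreover have "f (\<gamma> 0) = f (\<gamma> 1)" using eq unfolding \<gamma>_def by simp
  ultimately have "\<exists>z. 0 < z \<and> z < 1 \<and> (\<lambda>v. Df (\<gamma> z) (v *\<^sub>R (s *\<^sub>R b))) = (\<lambda>v. 0)"
    by (intro Rolle_deriv[of 0 1 "\<lambda>\<tau>. f (\<gamma> \<tau>)"] deriv) auto
  then obtain z where z: "0 < z" "z < 1" "(\<lambda>v. Df (\<gamma> z) (v *\<^sub>R (s *\<^sub>R b))) = (\<lambda>v. 0)"
    by blast
  then have "Df (\<gamma> z) (1 *\<^sub>R (s *\<^sub>R b)) = 0" by metis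
  then have "s * Df (\<gamma> z) b = 0" by (simp add: blinfun.scaleR_right)
  then show False using \<open>s \<noteq> 0\<close> nz \<gamma>U z by auto
qed

lemma ennreal_bounded_multiples_zero:
  fixes c C :: ennreal
  assumes mult_le: "\<And>N::nat. of_nat N * c \<le> C" and finite: "C < \<infinity>"
  shows "c = 0"
proof (rule ccontr)
  assume "c \<noteq> 0"
  have "c < \<infinity>" using mult_le[of 1] finite by auto
  then obtain r where r: "c = ennreal r" "r > 0" using \<open>c \<noteq> 0\<close> by (cases c) auto
  obtain R where R: "C = ennreal R" "R \<ge> 0" using finite by (cases C) auto
  obtain N :: nat where N: "real N > R / r" using reals_Archimedean2 by blast
  have "ennreal (real N * r) \<le> ennreal R"
    using mult_le[of N] r R by (simp add: ennreal_mult ennreal_of_nat_eq_real_of_nat)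
  then have "real N * r \<le> R" using R by (simp add: ennreal_le_iff)
  moreover have "real N * r > R" using N \<open>r > 0\<close> by (simp add: field_simps)
  ultimately show False by simp
qed

lemma emeasure_lborel_translate:
  fixes S :: "'a::euclidean_space set"
  assumes S: "S \<in> sets borel"
  shows "emeasure lborel ((\<lambda>y. y - c) -` S) = emeasure lborel S"
proof -
  have "emeasure lborel S = emeasure (distr lborel borel ((+) (- c))) S"
    by (simp add: lborel_distr_plus)
  also have "\<dots> = emeasure lborel ((+) (- c) -` S \<inter> space lborel)"
    by (rule emeasure_distr) (use S in auto)
  also have "(+) (- c) -` S \<inter> space lborel = (\<lambda>y. y - c) -` S"
    by auto
  finally show ?thesis by simp
qed

text \<open>A bounded Borel set whose translates along a fixed vector are pairwise disjoint is
  Lebesgue-null: arbitrarily many disjoint copies of equal measure fit into one ball.\<close>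

lemma null_sets_if_translates_disjoint:
  fixes S :: "'a::euclidean_space set" and b :: 'a
  assumes S: "S \<in> sets borel" and bdd: "bounded S"
    and once: "\<And>x s. x \<in> S \<Longrightarrow> x + s *\<^sub>R b \<in> S \<Longrightarrow> s = 0"
  shows "S \<in> null_sets lborel"
proof -
  define s where "s i = 1 / real (Suc i)" for i :: nat
  have s_inj: "s i = s j \<Longrightarrow> i = j" for i j unfolding s_def by simp
  have s_le: "\<bar>s i\<bar> \<le> 1" for i unfolding s_def by simp
  define T where "T i = (\<lambda>y. y - s i *\<^sub>R b) -` S" for i
  have T_sets: "T i \<in> sets lborel" for i
    unfolding T_def using measurable_sets[OF _ S, of "\<lambda>y::'a. y - s i *\<^sub>R b" borel] by simp
  have T_measure: "emeasure lborel (T i) = emeasure lborel S" for i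
    unfolding T_def by (rule emeasure_lborel_translate[OF S])
  have T_disjoint: "disjoint_family T"
    unfolding disjoint_family_on_def
  proof (intro ballI impI)
    fix i j :: nat assume "i \<noteq> j"
    show "T i \<inter> T j = {}"
    proof (rule ccontr)
      assume "T i \<inter> T j \<noteq> {}"
      then obtain y where y: "y - s i *\<^sub>R b \<in> S" "y - s j *\<^sub>R b \<in> S" unfolding T_def by auto
      have "(y - s i *\<^sub>R b) + (s i - s j) *\<^sub>R b = y - s j *\<^sub>R b" by (simp add: algebra_simps)
      then have "s i - s j = 0" using once[OF y(1), of "s i - s j"] y(2) by argo
      then show False using s_inj \<open>i \<noteq> j\<close> by simp
    qed
  qed
  obtain a where a: "\<And>x. x \<in> S \<Longrightarrow> norm x \<le> a" using bdd unfolding bounded_iff by blast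
  have T_bounded: "T i \<subseteq> cball 0 (a + norm b)" for i
  proof
    fix y assume "y \<in> T i"
    then have "norm (y - s i *\<^sub>R b) \<le> a" using a unfolding T_def by auto
    moreover have "norm (s i *\<^sub>R b) \<le> norm b" using s_le[of i] by (simp add: mult_left_le_one_le)
    ultimately show "y \<in> cball 0 (a + norm b)"
      using norm_triangle_ineq[of "y - s i *\<^sub>R b" "s i *\<^sub>R b"] by simp
  qed
  have "emeasure lborel S = 0"
  proof (rule ennreal_bounded_multiples_zero)
    show "emeasure lborel (cball (0::'a) (a + norm b)) < \<infinity>" by (rule emeasure_lborel_cball_finite)
    fix N :: nat
    have "of_nat N * emeasure lborel S = (\<Sum>i<N. emeasure lborel (T i))"
      by (simp add: T_measure)
    also have "\<dots> = emeasure lborel (\<Union>i<N. T i)"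
      by (rule sum_emeasure) (use T_sets T_disjoint in \<open>auto simp: disjoint_family_on_def\<close>)
    also have "\<dots> \<le> emeasure lborel (cball (0::'a) (a + norm b))"
      by (rule emeasure_mono) (use T_bounded in auto)
    finally show "of_nat N * emeasure lborel S \<le> emeasure lborel (cball (0::'a) (a + norm b))" .
  qed
  then show ?thesis using S by (simp add: null_sets_def)
qed

lemma level_set_null_local:
  fixes f :: "'a::euclidean_space \<Rightarrow> real" and Df :: "'a \<Rightarrow> 'a \<Rightarrow>\<^sub>L real"
  assumes fD: "\<And>x. (f has_derivative blinfun_apply (Df x)) (at x)"
    and Dcont: "continuous_on UNIV Df" and regular: "Df x0 \<noteq> 0"
  shows "\<exists>r>0. {x \<in> ball x0 r. f x = t} \<in> null_sets lborel"
proof -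
  obtain b where b: "Df x0 b \<noteq> 0"
    using regular blinfun_euclidean_eqI[of "Df x0" 0] by auto
  have "continuous (at x0) (\<lambda>x. Df x b)"
    using Dcont by (intro continuous_intros) (simp add: continuous_on_eq_continuous_at)
  then obtain r where r: "r > 0" "\<And>x. dist x0 x < r \<Longrightarrow> Df x b \<noteq> 0"
    using continuous_at_avoid[of x0 "\<lambda>x. Df x b", OF _ b] by blast
  have f_cont: "continuous_on UNIV f"
    using fD has_derivative_continuous continuous_at_imp_continuous_on by blast
  have "{x \<in> ball x0 r. f x = t} = ball x0 r \<inter> {x. f x = t}" by auto
  also have "\<dots> \<in> sets borel"
    using f_cont by (intro sets.Int borel_open borel_closed closed_Collect_eq continuous_on_const) auto
  finally have S: "{x \<in> ball x0 r. f x = t} \<in> sets borel" .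
  have "{x \<in> ball x0 r. f x = t} \<in> null_sets lborel"
  proof (rule null_sets_if_translates_disjoint[OF S, of b])
    fix x s assume "x \<in> {x \<in> ball x0 r. f x = t}" "x + s *\<^sub>R b \<in> {x \<in> ball x0 r. f x = t}"
    then show "s = 0" using level_set_line_unique[OF fD convex_ball, of x0 r b x s] r by auto
  qed (rule bounded_subset[OF bounded_ball], auto)
  then show ?thesis using r by blast
qed

lemma level_set_null:
  fixes f :: "'a::euclidean_space \<Rightarrow> real" and Df :: "'a \<Rightarrow> 'a \<Rightarrow>\<^sub>L real"
  assumes fD: "\<And>x. (f has_derivative blinfun_apply (Df x)) (at x)"
    and Dcont: "continuous_on UNIV Df"
    and regular: "\<And>x. f x = t \<Longrightarrow> Df x \<noteq> 0" and bdd: "bounded {x. f x = t}"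
  shows "{x. f x = t} \<in> null_sets lborel"
proof -
  define S where "S = {x. f x = t}"
  have "continuous_on UNIV f"
    using fD has_derivative_continuous continuous_at_imp_continuous_on by blast
  then have "closed S" unfolding S_def by (intro closed_Collect_eq continuous_on_const)
  then have "compact S" using bdd unfolding S_def by (simp add: compact_eq_bounded_closed)
  have "\<forall>x\<in>S. \<exists>r>0. {y \<in> ball x r. f y = t} \<in> null_sets lborel"
    using level_set_null_local[OF fD Dcont regular] unfolding S_def by blast
  then obtain r where r: "\<And>x. x \<in> S \<Longrightarrow> r x > 0 \<and> {y \<in> ball x (r x). f y = t} \<in> null_sets lborel"
    by metis
  obtain F where F: "F \<subseteq> S" "finite F" "S \<subseteq> (\<Union>x\<in>F. ball x (r x))"
    by (rule compactE_image[OF \<open>compact S\<close>, of S "\<lambda>x. ball x (r x)"]) (use r in auto)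
  have "S = (\<Union>x\<in>F. {y \<in> ball x (r x). f y = t})" using F unfolding S_def by blast
  also have "\<dots> \<in> null_sets lborel"
    using F r by (intro null_sets_UN' countable_finite) auto
  finally show ?thesis unfolding S_def .
qed

lemma (in prob_space) hoeffding_iid_geometric_tail:
  fixes Y :: "nat \<Rightarrow> 'a \<Rightarrow> real"
  assumes ind: "indep_vars (\<lambda>_. borel) Y UNIV"
    and same_distr: "\<And>i. distr M borel (Y i) = distr M borel (Y 0)"
    and bdd: "\<And>i \<omega>. \<bar>Y i \<omega>\<bar> \<le> B" and B: "B > 0" and eps: "\<epsilon> > 0"
  shows "prob {\<omega> \<in> space M. \<bar>(\<Sum>i<Suc n. Y i \<omega>) - real (Suc n) * expectation (Y 0)\<bar> \<ge> \<epsilon> * real (Suc n)}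
           \<le> 2 * exp (- (\<epsilon>\<^sup>2 / (2 * B\<^sup>2))) ^ Suc n"
proof -
  have exponent: "exp (-2 * (\<epsilon> * real (Suc n))\<^sup>2 / (real (Suc n) * (B - - B)\<^sup>2))
      = exp (- (\<epsilon>\<^sup>2 / (2 * B\<^sup>2))) ^ Suc n"
  proof -
    have N: "real (Suc n) > 0" by simp
    have B2: "(B - - B)\<^sup>2 = 4 * B\<^sup>2" by (simp add: power2_eq_square algebra_simps)
    have "-2 * (\<epsilon> * real (Suc n))\<^sup>2 / (real (Suc n) * (B - - B)\<^sup>2)
        = - (\<epsilon>\<^sup>2 / (2 * B\<^sup>2)) * real (Suc n)"
      unfolding B2 using B N by (simp add: field_simps power2_eq_square del: of_nat_Suc)
    then show ?thesis by (metis exp_of_nat_mult mult.commute)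
  qed
  have Y0_rv: "random_variable borel (Y 0)" using ind unfolding indep_vars_def by blast
  interpret H: Hoeffding_ineq_iid M "{..<Suc n}" Y "Y 0" "-B" B "expectation (Y 0)"
  proof unfold_locales
    show "indep_vars (\<lambda>_. borel) Y {..<Suc n}"
      by (rule indep_vars_subset[OF ind]) auto
    show "AE x in M. Y 0 x \<in> {- B..B}"
    proof (intro AE_I2)
      fix x show "Y 0 x \<in> {- B..B}" using bdd[of 0 x] by auto
    qed
  qed (auto simp: Y0_rv intro: same_distr)
  have "prob {\<omega> \<in> space M. \<bar>(\<Sum>i\<in>{..<Suc n}. Y i \<omega>) - real (card {..<Suc n}) * expectation (Y 0)\<bar>
          \<ge> \<epsilon> * real (Suc n)}
        \<le> 2 * exp (-2 * (\<epsilon> * real (Suc n))\<^sup>2 / (real (card {..<Suc n}) * (B - - B)\<^sup>2))"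
    by (rule H.Hoeffding_ineq_abs_ge) (use eps B in auto)
  then show ?thesis by (simp only: exponent card_lessThan)
qed

text \<open>By Borel--Cantelli the deviations of the partial sums eventually stay below any
  fixed linear bound, almost surely.\<close>

lemma (in prob_space) slln_bounded_deviation:
  fixes Y :: "nat \<Rightarrow> 'a \<Rightarrow> real"
  assumes ind: "indep_vars (\<lambda>_. borel) Y UNIV"
    and same_distr: "\<And>i. distr M borel (Y i) = distr M borel (Y 0)"
    and bdd: "\<And>i \<omega>. \<bar>Y i \<omega>\<bar> \<le> B" and eps: "\<epsilon> > 0"
  shows "AE \<omega> in M. eventually (\<lambda>n. \<bar>(\<Sum>i<Suc n. Y i \<omega>) - real (Suc n) * expectation (Y 0)\<bar>
           < \<epsilon> * real (Suc n)) sequentially"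
proof -
  define c where "c = \<epsilon>\<^sup>2 / (2 * (\<bar>B\<bar> + 1)\<^sup>2)"
  have c: "c > 0" using eps unfolding c_def by (simp add: add_pos_nonneg)
  have bdd': "\<bar>Y i \<omega>\<bar> \<le> \<bar>B\<bar> + 1" for i \<omega> using bdd[of i \<omega>] by simp
  define A where "A n = {\<omega> \<in> space M.
      \<bar>(\<Sum>i<Suc n. Y i \<omega>) - real (Suc n) * expectation (Y 0)\<bar> \<ge> \<epsilon> * real (Suc n)}" for n
  have Y_meas[measurable]: "Y i \<in> borel_measurable M" for i
    using ind unfolding indep_vars_def by blast
  have A_sets: "A n \<in> sets M" for n unfolding A_def by measurable
  have "summable (\<lambda>n. measure M (A n))"
  proof (rule summable_comparison_test[where g="\<lambda>n. 2 * exp (- c) ^ Suc n"])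
    show "\<exists>N. \<forall>n\<ge>N. norm (measure M (A n)) \<le> 2 * exp (- c) ^ Suc n"
      using hoeffding_iid_geometric_tail[OF ind same_distr bdd' _ eps] unfolding A_def c_def by auto
    have "summable (\<lambda>n. exp (- c) ^ n)" using c by (intro summable_geometric) simp
    then show "summable (\<lambda>n. 2 * exp (- c) ^ Suc n)"
      by (intro summable_mult summable_ignore_initial_segment[where k=1, simplified])
  qed
  then have "AE \<omega> in M. eventually (\<lambda>n. \<omega> \<in> space M - A n) sequentially"
    by (intro borel_cantelli_AE1[OF A_sets]) (simp_all add: emeasure_eq_measure)
  then show ?thesis
    by (rule AE_mp) (auto intro!: AE_I2 elim!: eventually_mono simp: A_def not_le)
qed

lemma (in prob_space) slln_bounded:
  fixes Y :: "nat \<Rightarrow> 'a \<Rightarrow> real"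
  assumes ind: "indep_vars (\<lambda>_. borel) Y UNIV"
    and same_distr: "\<And>i. distr M borel (Y i) = distr M borel (Y 0)"
    and bdd: "\<And>i \<omega>. \<bar>Y i \<omega>\<bar> \<le> B"
  shows "AE \<omega> in M. (\<lambda>n. (\<Sum>i<n. Y i \<omega>) / real n) \<longlonglongrightarrow> expectation (Y 0)"
proof -
  define \<mu> where "\<mu> = expectation (Y 0)"
  have "AE \<omega> in M. \<forall>m::nat. eventually (\<lambda>n. \<bar>(\<Sum>i<Suc n. Y i \<omega>) - real (Suc n) * \<mu>\<bar>
          < (1 / real (Suc m)) * real (Suc n)) sequentially"
    unfolding \<mu>_def by (subst AE_all_countable) (intro allI slln_bounded_deviation[OF ind same_distr bdd], simp)
  then show ?thesis
  proof (rule AE_mp, intro AE_I2 impI)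
    fix \<omega> assume dev: "\<forall>m::nat. eventually (\<lambda>n. \<bar>(\<Sum>i<Suc n. Y i \<omega>) - real (Suc n) * \<mu>\<bar>
          < (1 / real (Suc m)) * real (Suc n)) sequentially"
    have "(\<lambda>n. (\<Sum>i<Suc n. Y i \<omega>) / real (Suc n)) \<longlonglongrightarrow> \<mu>"
    proof (rule LIMSEQ_I)
      fix r :: real assume "r > 0"
      then obtain m :: nat where m: "1 / real (Suc m) < r" using nat_approx_posE by blast
      have "eventually (\<lambda>n. norm ((\<Sum>i<Suc n. Y i \<omega>) / real (Suc n) - \<mu>) < r) sequentially"
        using dev[rule_format, of m]
      proof eventually_elim
        case (elim n)
        have "norm ((\<Sum>i<Suc n. Y i \<omega>) / real (Suc n) - \<mu>)
            = \<bar>(\<Sum>i<Suc n. Y i \<omega>) - real (Suc n) * \<mu>\<bar> / real (Suc n)"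
          by (simp add: field_simps abs_divide[symmetric] del: of_nat_Suc)
        also have "\<dots> < 1 / real (Suc m)" using elim by (simp add: field_simps del: of_nat_Suc)
        finally show ?case using m by linarith
      qed
      then show "\<exists>no. \<forall>n\<ge>no. norm ((\<Sum>i<Suc n. Y i \<omega>) / real (Suc n) - \<mu>) < r"
        unfolding eventually_sequentially .
    qed
    then show "(\<lambda>n. (\<Sum>i<n. Y i \<omega>) / real n) \<longlonglongrightarrow> expectation (Y 0)"
      unfolding \<mu>_def by (rule LIMSEQ_imp_Suc)
  qed
qed

lemma uniform_convergence_from_dense:
  fixes G :: "nat \<Rightarrow> 'a::metric_space \<Rightarrow> real" and g :: "'a \<Rightarrow> real"
  assumes dense: "\<And>U. open U \<Longrightarrow> U \<noteq> {} \<Longrightarrow> \<exists>q\<in>Q. q \<in> U"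
    and equi: "\<And>e. e > 0 \<Longrightarrow> \<exists>\<delta>>0. \<forall>z q. dist z q < \<delta> \<longrightarrow>
        (\<forall>n. \<bar>G n z - G n q\<bar> \<le> e) \<and> \<bar>g z - g q\<bar> \<le> e"
    and conv: "\<And>q. q \<in> Q \<Longrightarrow> (\<lambda>n. G n q) \<longlonglongrightarrow> g q"
    and C: "compact C" and e: "e > 0"
  shows "eventually (\<lambda>n. \<forall>z\<in>C. \<bar>G n z - g z\<bar> \<le> e) sequentially"
proof -
  obtain \<delta> where \<delta>: "\<delta> > 0"
    "\<And>z q. dist z q < \<delta> \<Longrightarrow> (\<forall>n. \<bar>G n z - G n q\<bar> \<le> e / 3) \<and> \<bar>g z - g q\<bar> \<le> e / 3"
    using equi[of "e / 3"] e by auto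
  have cover: "C \<subseteq> (\<Union>q\<in>Q. ball q \<delta>)"
  proof
    fix z assume "z \<in> C"
    obtain q where "q \<in> Q" "q \<in> ball z \<delta>" using dense[of "ball z \<delta>"] \<delta>(1) by auto
    then show "z \<in> (\<Union>q\<in>Q. ball q \<delta>)" by (auto simp: dist_commute)
  qed
  obtain F where F: "F \<subseteq> Q" "finite F" "C \<subseteq> (\<Union>q\<in>F. ball q \<delta>)"
    by (rule compactE_image[OF C, of Q "\<lambda>q. ball q \<delta>"]) (use cover in auto)
  have "eventually (\<lambda>n. \<forall>q\<in>F. \<bar>G n q - g q\<bar> < e / 3) sequentially"
  proof (rule eventually_ball_finite[OF F(2)], intro ballI)
    fix q assume "q \<in> F"
    then have "(\<lambda>n. G n q) \<longlonglongrightarrow> g q" using conv F(1) by auto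
    moreover have "e / 3 > 0" using e by simp
    ultimately show "eventually (\<lambda>n. \<bar>G n q - g q\<bar> < e / 3) sequentially"
      unfolding tendsto_iff dist_real_def by blast
  qed
  then show ?thesis
  proof eventually_elim
    case (elim n)
    show ?case
    proof
      fix z assume "z \<in> C"
      then obtain q where q: "q \<in> F" "dist z q < \<delta>" using F(3) by (auto simp: dist_commute)
      then have "\<bar>G n z - G n q\<bar> \<le> e / 3" "\<bar>g z - g q\<bar> \<le> e / 3" "\<bar>G n q - g q\<bar> < e / 3"
        using \<delta>(2) elim by auto
      then show "\<bar>G n z - g z\<bar> \<le> e" by linarith
    qed
  qed
qed

lemma tendsto_by_approximation:
  fixes a b :: "nat \<Rightarrow> real"
  assumes close: "\<And>r. r > 0 \<Longrightarrow> eventually (\<lambda>n. \<bar>a n - b n\<bar> \<le> r) sequentially"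
    and lim: "b \<longlonglongrightarrow> L"
  shows "a \<longlonglongrightarrow> L"
proof (rule Lim_transform[OF lim])
  show "(\<lambda>n. a n - b n) \<longlonglongrightarrow> 0"
    unfolding tendsto_iff dist_real_def
  proof (intro allI impI)
    fix r :: real assume "r > 0"
    then show "eventually (\<lambda>n. \<bar>a n - b n - 0\<bar> < r) sequentially"
      using close[of "r / 2"] by (auto elim: eventually_mono)
  qed
qed

lemma selection_sum_deviation:
  fixes a l b :: "nat \<Rightarrow> real" and J :: "nat set"
  assumes J: "J \<subseteq> {..<n}" and aB: "\<And>j. \<bar>a j\<bar> \<le> B"
    and l01: "\<And>j. l j = 0 \<or> l j = 1" and b_nonneg: "\<And>j. b j \<ge> 0"
    and mis: "\<And>j. j < n \<Longrightarrow> (j \<in> J) \<noteq> (l j = 1) \<Longrightarrow> b j = 1"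
  shows "\<bar>(\<Sum>j\<in>J. a j) - (\<Sum>j<n. l j * a j)\<bar> \<le> B * (\<Sum>j<n. b j)"
proof -
  define sel :: "nat \<Rightarrow> real" where "sel j = (if j \<in> J then 1 else 0)" for j
  have "(\<Sum>j<n. sel j * a j) = (\<Sum>j<n. if j \<in> J then a j else 0)"
    unfolding sel_def by (rule sum.cong) auto
  also have "\<dots> = sum a ({..<n} \<inter> J)" by (rule sum.inter_restrict[symmetric]) simp
  also have "{..<n} \<inter> J = J" using J by auto
  finally have "(\<Sum>j\<in>J. a j) = (\<Sum>j<n. sel j * a j)" by simp
  then have "\<bar>(\<Sum>j\<in>J. a j) - (\<Sum>j<n. l j * a j)\<bar> = \<bar>\<Sum>j<n. (sel j - l j) * a j\<bar>"
    by (simp add: sum_subtractf left_diff_distrib)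
  also have "\<dots> \<le> (\<Sum>j<n. \<bar>sel j - l j\<bar> * \<bar>a j\<bar>)" by (rule order_trans[OF sum_abs]) (simp add: abs_mult)
  also have "\<dots> \<le> (\<Sum>j<n. B * b j)"
  proof (rule sum_mono)
    fix j assume "j \<in> {..<n}"
    show "\<bar>sel j - l j\<bar> * \<bar>a j\<bar> \<le> B * b j"
    proof (cases "(j \<in> J) \<noteq> (l j = 1)")
      case True
      then have "b j = 1" using mis \<open>j \<in> {..<n}\<close> by simp
      moreover have "\<bar>sel j - l j\<bar> \<le> 1" using l01[of j] unfolding sel_def by auto
      moreover have "\<bar>sel j - l j\<bar> * \<bar>a j\<bar> \<le> 1 * B"
        using \<open>\<bar>sel j - l j\<bar> \<le> 1\<close> aB[of j] by (intro mult_mono) auto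
      ultimately show ?thesis by simp
    next
      case False
      then have "sel j - l j = 0" using l01[of j] unfolding sel_def by auto
      then show ?thesis using b_nonneg[of j] aB[of j] by (simp add: order_trans[OF abs_ge_zero])
    qed
  qed
  also have "\<dots> = B * (\<Sum>j<n. b j)" by (simp add: sum_distrib_left)
  finally show ?thesis .
qed

lemma selection_average_limit:
  fixes a l :: "nat \<Rightarrow> real" and bm :: "nat \<Rightarrow> nat \<Rightarrow> real" and J :: "nat \<Rightarrow> nat set"
  assumes Jsub: "\<And>n. J n \<subseteq> {..<n}"
    and aB: "\<And>j. \<bar>a j\<bar> \<le> B"
    and l01: "\<And>j. l j = 0 \<or> l j = 1"
    and bm_nonneg: "\<And>m j. bm m j \<ge> 0"
    and mis: "\<And>m. eventually (\<lambda>n. \<forall>j<n. (j \<in> J n) \<noteq> (l j = 1) \<longrightarrow> bm m j = 1) sequentially"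
    and band: "\<And>m. (\<lambda>n. (\<Sum>j<n. bm m j) / real n) \<longlonglongrightarrow> P m"
    and P0: "P \<longlonglongrightarrow> 0"
    and E: "(\<lambda>n. (\<Sum>j<n. l j * a j) / real n) \<longlonglongrightarrow> E"
  shows "(\<lambda>n. (\<Sum>j\<in>J n. a j) / real n) \<longlonglongrightarrow> E"
proof (rule tendsto_by_approximation[OF _ E])
  fix r :: real assume r: "r > 0"
  define B' where "B' = \<bar>B\<bar> + 1"
  have B'_pos: "B' > 0" unfolding B'_def by simp
  have aB': "\<bar>a j\<bar> \<le> B'" for j using aB[of j] abs_ge_self[of B] unfolding B'_def by linarith
  note B' = B'_pos aB'
  have "eventually (\<lambda>m. \<bar>P m - 0\<bar> < r / (2 * B')) sequentially"
    using P0 r B' unfolding tendsto_iff by (auto simp: dist_real_def)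
  then obtain m where m: "\<bar>P m\<bar> < r / (2 * B')" unfolding eventually_sequentially by auto
  have ev1: "eventually (\<lambda>n. \<bar>(\<Sum>j<n. bm m j) / real n - P m\<bar> < r / (2 * B')) sequentially"
    using band[of m] r B' unfolding tendsto_iff by (auto simp: dist_real_def)
  show "eventually (\<lambda>n. \<bar>(\<Sum>j\<in>J n. a j) / real n - (\<Sum>j<n. l j * a j) / real n\<bar> \<le> r) sequentially"
    using ev1 mis[of m] eventually_gt_at_top[of 0]
  proof eventually_elim
    case (elim n)
    have "\<bar>(\<Sum>j\<in>J n. a j) - (\<Sum>j<n. l j * a j)\<bar> \<le> B' * (\<Sum>j<n. bm m j)"
      by (rule selection_sum_deviation[OF Jsub B'(2) l01 bm_nonneg]) (use elim in blast)
    moreover have "(\<Sum>j<n. bm m j) / real n < r / B'"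
      using elim(1) m by (simp add: abs_less_iff field_simps)
    then have "B' * ((\<Sum>j<n. bm m j) / real n) \<le> r" using B'_pos by (simp add: field_simps)
    ultimately show ?case
      using elim(3) by (simp add: diff_divide_distrib[symmetric] abs_divide divide_le_eq field_simps)
  qed
qed

text \<open>The same for the selected mean: dividing by \<open>card (J n)\<close> is a ratio of two such limits.\<close>

lemma selection_mean_limit:
  fixes a l :: "nat \<Rightarrow> real" and bm :: "nat \<Rightarrow> nat \<Rightarrow> real" and J :: "nat \<Rightarrow> nat set"
  assumes Jsub: "\<And>n. J n \<subseteq> {..<n}"
    and aB: "\<And>j. \<bar>a j\<bar> \<le> B"
    and l01: "\<And>j. l j = 0 \<or> l j = 1"
    and bm_nonneg: "\<And>m j. bm m j \<ge> 0"
    and mis: "\<And>m. eventually (\<lambda>n. \<forall>j<n. (j \<in> J n) \<noteq> (l j = 1) \<longrightarrow> bm m j = 1) sequentially"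
    and band: "\<And>m. (\<lambda>n. (\<Sum>j<n. bm m j) / real n) \<longlonglongrightarrow> P m"
    and P0: "P \<longlonglongrightarrow> 0"
    and E: "(\<lambda>n. (\<Sum>j<n. l j * a j) / real n) \<longlonglongrightarrow> E"
    and p: "(\<lambda>n. (\<Sum>j<n. l j) / real n) \<longlonglongrightarrow> p" and p0: "p \<noteq> 0"
  shows "(\<lambda>n. (\<Sum>j\<in>J n. a j) / real (card (J n))) \<longlonglongrightarrow> E / p"
proof -
  have A: "(\<lambda>n. (\<Sum>j\<in>J n. a j) / real n) \<longlonglongrightarrow> E"
    by (rule selection_average_limit[OF Jsub aB l01 bm_nonneg mis band P0 E])
  have C: "(\<lambda>n. (\<Sum>j\<in>J n. 1) / real n) \<longlonglongrightarrow> p"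
    by (rule selection_average_limit[OF Jsub _ l01 bm_nonneg mis band P0, of "\<lambda>_. 1" 1]) (use p in auto)
  have "(\<lambda>n. ((\<Sum>j\<in>J n. a j) / real n) / ((\<Sum>j\<in>J n. 1) / real n)) \<longlonglongrightarrow> E / p"
    by (rule tendsto_divide[OF A C p0])
  moreover have "eventually (\<lambda>n. ((\<Sum>j\<in>J n. a j) / real n) / ((\<Sum>j\<in>J n. 1) / real n)
       = (\<Sum>j\<in>J n. a j) / real (card (J n))) sequentially"
    using eventually_gt_at_top[of 0] by eventually_elim simp
  ultimately show ?thesis using Lim_transform_eventually by fastforce
qed

lemma ratio_close_to_one:
  fixes K Kn c \<eta> :: real
  assumes K: "K \<ge> c" and c: "c > 0" and close: "\<bar>Kn - K\<bar> \<le> \<eta>" and \<eta>: "\<eta> \<le> c / 2"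
  shows "\<bar>K / Kn - 1\<bar> \<le> 2 * \<eta> / c"
proof -
  have Kn: "Kn \<ge> c / 2" using K close \<eta> by linarith
  then have "Kn > 0" using c by linarith
  then have "\<bar>K / Kn - 1\<bar> = \<bar>K - Kn\<bar> / Kn" by (simp add: field_simps abs_divide)
  also have "\<dots> \<le> \<eta> / (c / 2)"
    using close Kn c \<open>Kn > 0\<close> by (intro frac_le) (auto simp: abs_minus_commute)
  finally show ?thesis by (simp add: mult.commute)
qed

lemma quotient_derivative_bound:
  fixes A An K Kn c \<alpha> \<beta> \<eta>0 :: real
  assumes Kn: "Kn \<ge> c / 2" and c: "c > 0" and K: "\<bar>Kn - K\<bar> \<le> \<eta>0"
    and A: "\<bar>A - An\<bar> \<le> \<alpha>" and An: "\<bar>An\<bar> \<le> \<beta>"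
  shows "\<bar>(- A * Kn - K * (- An)) / (Kn * Kn)\<bar> \<le> 2 * \<alpha> / c + 4 * \<eta>0 * \<beta> / c\<^sup>2"
proof -
  have Kpos: "Kn > 0" using Kn c by simp
  have "- A * Kn - K * (- An) = - ((A - An) * Kn) - (Kn - K) * An" by (simp add: algebra_simps)
  then have "\<bar>(- A * Kn - K * (- An)) / (Kn * Kn)\<bar> = \<bar>- ((A - An) * Kn) - (Kn - K) * An\<bar> / (Kn * Kn)"
    using Kpos by (simp add: abs_divide)
  also have "\<dots> \<le> (\<bar>A - An\<bar> * Kn + \<bar>Kn - K\<bar> * \<bar>An\<bar>) / (Kn * Kn)"
    using Kpos by (intro divide_right_mono) (auto simp: abs_mult intro: order_trans[OF abs_triangle_ineq4])
  also have "\<dots> = \<bar>A - An\<bar> / Kn + \<bar>Kn - K\<bar> * \<bar>An\<bar> / (Kn * Kn)"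
    using Kpos by (simp add: add_divide_distrib)
  also have "\<bar>A - An\<bar> / Kn \<le> 2 * \<alpha> / c"
  proof -
    have "\<bar>A - An\<bar> / Kn \<le> \<alpha> / Kn" using A Kpos by (simp add: divide_right_mono)
    also have "\<dots> \<le> \<alpha> / (c / 2)" using A Kpos Kn c by (intro divide_left_mono) auto
    also have "\<dots> = 2 * \<alpha> / c" by simp
    finally show ?thesis .
  qed
  also have "\<bar>Kn - K\<bar> * \<bar>An\<bar> / (Kn * Kn) \<le> 4 * \<eta>0 * \<beta> / c\<^sup>2"
  proof -
    have "\<bar>Kn - K\<bar> * \<bar>An\<bar> \<le> \<eta>0 * \<beta>" using K An by (intro mult_mono) auto
    then have "\<bar>Kn - K\<bar> * \<bar>An\<bar> / (Kn * Kn) \<le> \<eta>0 * \<beta> / (Kn * Kn)" using Kpos by (simp add: divide_right_mono)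
    also have "\<dots> \<le> \<eta>0 * \<beta> / ((c / 2) * (c / 2))"
      using K An Kpos Kn c by (intro divide_left_mono mult_mono) (auto intro: order_trans[OF abs_ge_zero])
    also have "\<dots> = 4 * \<eta>0 * \<beta> / c\<^sup>2" by (simp add: power2_eq_square field_simps)
    finally show ?thesis .
  qed
  finally show ?thesis by simp
qed

text \<open>Choice of the accuracies used in the derivative estimate below.\<close>

lemma derivative_error_budget:
  fixes c e d S :: real
  assumes c: "c > 0" and e: "e > 0" and d: "d > 0" and S: "S \<ge> 0"
  shows "2 * (2 * (d * (e * c / (8 * d))) / c + 4 * min (c / 2) (e * c\<^sup>2 / (16 * (S + 1))) * S / c\<^sup>2)
    \<le> e"
proof -
  define \<eta>0 where "\<eta>0 = min (c / 2) (e * c\<^sup>2 / (16 * (S + 1)))"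
  have "\<eta>0 * S \<le> e * c\<^sup>2 / (16 * (S + 1)) * S" unfolding \<eta>0_def using S by (intro mult_right_mono) auto
  also have "\<dots> \<le> e * c\<^sup>2 / 16" using S e by (auto simp: divide_simps intro!: mult_left_mono)
  finally have "8 * \<eta>0 * S / c\<^sup>2 \<le> e / 2" using c by (simp add: divide_simps)
  moreover have "4 * (d * (e * c / (8 * d))) / c = e / 2" using c d by (simp add: field_simps)
  moreover have "2 * (2 * (d * (e * c / (8 * d))) / c + 4 * \<eta>0 * S / c\<^sup>2)
      = 4 * (d * (e * c / (8 * d))) / c + 8 * \<eta>0 * S / c\<^sup>2"
    using c by (simp add: field_simps)
  ultimately show ?thesis unfolding \<eta>0_def by linarith
qed

locale smooth_kernel =
  fixes k :: "'a::euclidean_space \<Rightarrow> real"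
  assumes k_nonneg: "\<And>x. k x \<ge> 0"
    and k_C2: "C2_fun k"
    and k_supp: "closure {x. k x \<noteq> 0} = cball 0 1"
begin

definition Dk :: "'a \<Rightarrow> 'a \<Rightarrow>\<^sub>L real" where
  "Dk = (SOME g'. \<forall>x. (k has_derivative blinfun_apply (g' x)) (at x))"

lemma k_has_derivative: "(k has_derivative blinfun_apply (Dk x)) (at x)"
proof -
  have "\<exists>g'. \<forall>x. (k has_derivative blinfun_apply (g' x)) (at x)"
    using k_C2 unfolding C2_fun_def by blast
  then have "\<forall>x. (k has_derivative blinfun_apply (Dk x)) (at x)"
    unfolding Dk_def by (rule someI_ex)
  then show ?thesis by blast
qed

lemma Dk_cont: "continuous_on UNIV Dk"
proof -
  obtain g' g'' where g': "\<forall>x. (k has_derivative blinfun_apply (g' x)) (at x)"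
    and g'': "\<forall>x. (g' has_derivative blinfun_apply (g'' x)) (at x)"
    using k_C2 unfolding C2_fun_def by blast
  have "g' = Dk"
  proof
    fix x show "g' x = Dk x"
      using has_derivative_unique[OF g'[rule_format, of x] k_has_derivative[of x]] blinfun_eqI by metis
  qed
  moreover have "continuous_on UNIV g'"
    by (intro continuous_at_imp_continuous_on ballI has_derivative_continuous[OF g''[rule_format]])
  ultimately show ?thesis by simp
qed

lemma k_cont: "continuous_on UNIV k"
  by (intro continuous_at_imp_continuous_on ballI has_derivative_continuous[OF k_has_derivative])

lemma k_vanish: "norm x > 1 \<Longrightarrow> k x = 0"
  using closure_subset[of "{x. k x \<noteq> 0}"] unfolding k_supp by (force simp: mem_cball_0)

lemma Dk_vanish:
  assumes x: "norm x > 1"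
  shows "Dk x = 0"
proof -
  have outside: "open {y::'a. norm y > 1}"
    by (simp add: open_Collect_less continuous_on_norm_id continuous_on_const)
  have "((\<lambda>_. 0::real) has_derivative (\<lambda>_. 0)) (at x)" by simp
  then have "(k has_derivative (\<lambda>_. 0)) (at x)"
    by (rule has_derivative_transform_within_open[OF _ outside]) (use x k_vanish in auto)
  then have "blinfun_apply (Dk x) = (\<lambda>_. 0)"
    using has_derivative_unique k_has_derivative by blast
  then show ?thesis by (intro blinfun_eqI) simp
qed

lemma k_uc: "uniformly_continuous_on UNIV k"
  by (rule uniformly_continuous_compact_support[OF k_cont k_vanish])

lemma Dk_uc: "uniformly_continuous_on UNIV Dk"
  by (rule uniformly_continuous_compact_support[OF Dk_cont Dk_vanish])

lemma k_bounded: "\<exists>B. \<forall>x. \<bar>k x\<bar> \<le> B"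
  using bounded_compact_support[OF k_cont k_vanish] by simp

lemma Dk_bounded: "\<exists>B. \<forall>x. norm (Dk x) \<le> B"
  by (rule bounded_compact_support[OF Dk_cont Dk_vanish])

text \<open>First-order Taylor expansion of the kernel with a remainder that is uniform in the
  base point (from uniform continuity of the derivative).\<close>

lemma k_first_order:
  assumes "\<eta> > 0"
  shows "\<exists>\<delta>>0. \<forall>w u. norm u < \<delta> \<longrightarrow> \<bar>k (w + u) - k w - Dk w u\<bar> \<le> \<eta> * norm u"
proof -
  obtain \<delta> where \<delta>: "\<delta> > 0" "\<forall>x y. dist y x < \<delta> \<longrightarrow> dist (Dk y) (Dk x) < \<eta>"
    using Dk_uc assms unfolding uniformly_continuous_on_def by blast
  have "\<bar>k (w + u) - k w - Dk w u\<bar> \<le> \<eta> * norm u" if u: "norm u < \<delta>" for w u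
  proof -
    have "norm (k (w + u) - k w - blinfun_apply (Dk w) ((w + u) - w)) \<le> norm ((w + u) - w) * \<eta>"
    proof (rule differentiable_bound_linearization[where S="ball w \<delta>"])
      fix t :: real assume t: "t \<in> {0..1}"
      then have "t * norm u \<le> norm u" by (simp add: mult_left_le_one_le)
      then show "w + t *\<^sub>R (w + u - w) \<in> ball w \<delta>" using u t by (simp add: dist_norm)
    next
      fix x assume "x \<in> ball w \<delta>"
      show "(k has_derivative blinfun_apply (Dk x)) (at x within ball w \<delta>)"
        using k_has_derivative has_derivative_at_withinI by blast
      have "dist x w < \<delta>" using \<open>x \<in> ball w \<delta>\<close> by (simp add: dist_commute)
      then have "norm (Dk x - Dk w) \<le> \<eta>" using \<delta> by (simp add: dist_norm less_imp_le)
      moreover have "blinfun_apply (Dk x) - blinfun_apply (Dk w) = blinfun_apply (Dk x - Dk w)"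
        by (rule ext) (simp add: blinfun.diff_left)
      ultimately show "onorm (blinfun_apply (Dk x) - blinfun_apply (Dk w)) \<le> \<eta>"
        by (simp add: norm_blinfun.rep_eq)
    qed (use \<delta> in auto)
    then show ?thesis by (simp add: mult.commute)
  qed
  then show ?thesis using \<delta>(1) by blast
qed

end

locale iid_level_sample = prob_space M for M :: "'b measure" +
  fixes X :: "nat \<Rightarrow> 'b \<Rightarrow> 'a::euclidean_space" and f :: "'a \<Rightarrow> real"
    and Df :: "'a \<Rightarrow> 'a \<Rightarrow>\<^sub>L real" and t :: real
  assumes indep: "indep_vars (\<lambda>_. borel) X UNIV"
    and distr: "\<And>i. distributed M lborel (X i) (\<lambda>x. ennreal (f x))"
    and t_pos: "t > 0"
    and Lt_ne: "superlevel f t \<noteq> {}"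
    and Lt_cpt: "compact (superlevel f t)"
    and f_D1: "\<And>x. (f has_derivative blinfun_apply (Df x)) (at x)"
    and Dcont: "continuous_on UNIV Df"
    and grad_pos: "\<And>x. f x = t \<Longrightarrow> norm (Df x) > 0"
begin

definition L :: "'a set" where
  "L = superlevel f t"
definition p :: real where
  "p = prob {\<omega> \<in> space M. X 0 \<omega> \<in> L}"

lemma X_measurable[measurable]: "X i \<in> borel_measurable M"
  using distributed_measurable[OF distr[of i]] by simp

lemma f_cont: "continuous_on UNIV f"
  using f_D1 has_derivative_continuous continuous_at_imp_continuous_on by blast

lemma f_measurable[measurable]: "f \<in> borel_measurable borel"
  by (rule borel_measurable_continuous_onI[OF f_cont])

lemma L_closed: "closed L"
  unfolding L_def using Lt_cpt by (simp add: compact_imp_closed)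

lemma L_sets[measurable]: "L \<in> sets borel"
  using L_closed by simp

text \<open>All \<open>g(X\<^sub>i)\<close> have the same law, so the strong law applies to them.\<close>

lemma distr_compose_same:
  assumes g[measurable]: "g \<in> borel_measurable borel"
  shows "distr M borel (\<lambda>\<omega>. g (X i \<omega>)) = distr M borel (\<lambda>\<omega>. g (X 0 \<omega>))"
proof -
  have e: "distr M borel (\<lambda>\<omega>. g (X j \<omega>)) = distr (density lborel (\<lambda>x. ennreal (f x))) borel g" for j
  proof -
    have "distr M borel (\<lambda>\<omega>. g (X j \<omega>)) = distr (distr M lborel (X j)) borel g"
      by (subst distr_distr) (auto simp: comp_def)
    also have "distr M lborel (X j) = density lborel (\<lambda>x. ennreal (f x))"
      by (rule distributed_distr_eq_density[OF distr])
    finally show ?thesis .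
  qed
  show ?thesis by (simp only: e)
qed

lemma slln_sample:
  assumes g[measurable]: "g \<in> borel_measurable borel" and bd: "\<And>y. \<bar>g y\<bar> \<le> B"
  shows "AE \<omega> in M. (\<lambda>n. (\<Sum>i<n. g (X i \<omega>)) / real n) \<longlonglongrightarrow> expectation (\<lambda>\<omega>. g (X 0 \<omega>))"
proof -
  have "indep_vars (\<lambda>_. borel) (\<lambda>i \<omega>. g (X i \<omega>)) UNIV"
    by (rule indep_vars_compose2[OF indep]) simp
  then show ?thesis
    by (rule slln_bounded[of "\<lambda>i \<omega>. g (X i \<omega>)" B, OF _ distr_compose_same[OF g] bd])
qed

lemma expectation_indicator:
  assumes [measurable]: "A \<in> sets borel"
  shows "expectation (\<lambda>\<omega>. indicator A (X 0 \<omega>)) = prob {\<omega> \<in> space M. X 0 \<omega> \<in> A}"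
proof -
  have "expectation (\<lambda>\<omega>. indicator A (X 0 \<omega>)) = expectation (indicator {\<omega> \<in> space M. X 0 \<omega> \<in> A})"
    by (rule Bochner_Integration.integral_cong) (auto simp: indicator_def)
  also have "\<dots> = prob {\<omega> \<in> space M. X 0 \<omega> \<in> A}" by (simp add: Int_absorb2)
  finally show ?thesis .
qed

text \<open>The boundary \<open>{f = t}\<close> is hit with probability zero, since it is Lebesgue-null.\<close>

lemma prob_level_set: "prob {\<omega> \<in> space M. f (X 0 \<omega>) = t} = 0"
proof -
  have bd: "bounded {x. f x = t}"
    by (rule bounded_subset[OF compact_imp_bounded[OF Lt_cpt]]) (auto simp: superlevel_def)
  have nz: "Df x \<noteq> 0" if "f x = t" for x using grad_pos[OF that] by auto
  have N: "{x. f x = t} \<in> null_sets lborel"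
    by (rule level_set_null[OF f_D1 Dcont nz bd])
  have "emeasure M (X 0 -` {x. f x = t} \<inter> space M) = (\<integral>\<^sup>+x. ennreal (f x) * indicator {x. f x = t} x \<partial>lborel)"
    by (rule distributed_emeasure[OF distr]) simp
  also have "\<dots> = 0" by (rule nn_integral_null_set[OF N])
  finally have "emeasure M (X 0 -` {x. f x = t} \<inter> space M) = 0" by simp
  moreover have "X 0 -` {x. f x = t} \<inter> space M = {\<omega> \<in> space M. f (X 0 \<omega>) = t}" by auto
  ultimately show ?thesis by (simp add: measure_def)
qed

text \<open>Thin bands around the boundary; their probabilities shrink to that of the boundary, i.e. to 0.\<close>

definition thin_band :: "nat \<Rightarrow> 'a set" where
  "thin_band m = {y. \<bar>f y - t\<bar> \<le> 1 / real (Suc m)}"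

lemma thin_band_sets[measurable]: "thin_band m \<in> sets borel"
  unfolding thin_band_def by measurable

lemma prob_thin_band_vanish: "(\<lambda>m. prob {\<omega> \<in> space M. X 0 \<omega> \<in> thin_band m}) \<longlonglongrightarrow> 0"
proof -
  define A where "A m = {\<omega> \<in> space M. X 0 \<omega> \<in> thin_band m}" for m
  have "range A \<subseteq> sets M" unfolding A_def by auto
  moreover have "decseq A"
    unfolding decseq_def A_def thin_band_def
  proof (intro allI impI subsetI)
    fix m n :: nat and \<omega> assume mn: "m \<le> n" and w: "\<omega> \<in> {\<omega> \<in> space M. X 0 \<omega> \<in> {y. \<bar>f y - t\<bar> \<le> 1 / real (Suc n)}}"
    have "1 / real (Suc n) \<le> 1 / real (Suc m)" by (rule frac_le) (use mn in auto)
    then show "\<omega> \<in> {\<omega> \<in> space M. X 0 \<omega> \<in> {y. \<bar>f y - t\<bar> \<le> 1 / real (Suc m)}}" using w by auto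
  qed
  ultimately have "(\<lambda>m. prob (A m)) \<longlonglongrightarrow> prob (\<Inter>m. A m)"
    by (rule finite_Lim_measure_decseq)
  moreover have "(\<Inter>m. A m) = {\<omega> \<in> space M. f (X 0 \<omega>) = t}"
  proof
    show "(\<Inter>m. A m) \<subseteq> {\<omega> \<in> space M. f (X 0 \<omega>) = t}"
    proof
      fix \<omega> assume "\<omega> \<in> (\<Inter>m. A m)"
      then have sp: "\<omega> \<in> space M" and H: "\<And>m. \<bar>f (X 0 \<omega>) - t\<bar> \<le> 1 / real (Suc m)"
        unfolding A_def thin_band_def by auto
      have "\<bar>f (X 0 \<omega>) - t\<bar> \<le> 0"
      proof (rule field_le_epsilon)
        fix e :: real assume "e > 0"
        then obtain m where "1 / real (Suc m) < e" using nat_approx_posE by blast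
        then show "\<bar>f (X 0 \<omega>) - t\<bar> \<le> 0 + e" using H[of m] by simp
      qed
      then show "\<omega> \<in> {\<omega> \<in> space M. f (X 0 \<omega>) = t}" using sp by simp
    qed
  next
    show "{\<omega> \<in> space M. f (X 0 \<omega>) = t} \<subseteq> (\<Inter>m. A m)"
      unfolding A_def thin_band_def by auto
  qed
  ultimately show ?thesis unfolding A_def by (simp only: prob_level_set)
qed

text \<open>Every point of \<open>L(t)\<close> has points with \<open>f > t\<close> arbitrarily close to it, since
  otherwise it would be a local maximum with nonzero gradient.\<close>

lemma exists_above_level:
  assumes x: "x \<in> L" and rho: "\<rho> > 0"
  shows "\<exists>w\<in>ball x \<rho>. f w > t"
proof (rule ccontr)
  assume "\<not> (\<exists>w\<in>ball x \<rho>. f w > t)"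
  then have le: "\<And>w. w \<in> ball x \<rho> \<Longrightarrow> f w \<le> t" by (simp add: not_less)
  have fx: "f x = t" using le[of x] rho x unfolding L_def superlevel_def by simp
  have "eventually (\<lambda>y. f y \<le> f x) (at x)"
    unfolding eventually_at using rho le fx by (auto simp: dist_commute)
  then have "blinfun_apply (Df x) = (\<lambda>h. 0)" by (rule has_derivative_local_max[OF f_D1])
  then have "Df x = 0" by (intro blinfun_eqI) simp
  then show False using grad_pos[OF fx] by simp
qed

lemma prob_ball_positive:
  assumes x: "x \<in> L" and rho: "\<rho> > 0"
  shows "prob {\<omega> \<in> space M. X 0 \<omega> \<in> L \<inter> ball x \<rho>} > 0"
proof -
  obtain w where w: "w \<in> ball x \<rho>" "f w > t" using exists_above_level[OF x rho] by blast
  have "open ({y. f y > t} \<inter> ball x \<rho>)"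
    by (intro open_Int open_Collect_less continuous_on_const f_cont) simp
  then obtain \<rho>' where \<rho>': "\<rho>' > 0" "ball w \<rho>' \<subseteq> {y. f y > t} \<inter> ball x \<rho>"
    using w unfolding open_contains_ball by blast
  have sub: "ball w \<rho>' \<subseteq> L \<inter> ball x \<rho>" using \<rho>' unfolding L_def superlevel_def by auto
  have "0 < measure lborel (ball w \<rho>')" by (rule content_ball_pos[OF \<rho>'(1)])
  moreover have "emeasure lborel (ball w \<rho>') = ennreal (measure lborel (ball w \<rho>'))"
    using emeasure_lborel_ball_finite[of w \<rho>'] by (intro emeasure_eq_ennreal_measure) (simp add: less_top)
  ultimately have pos_ball: "0 < emeasure lborel (ball w \<rho>')" by simp
  have "0 < ennreal t * emeasure lborel (ball w \<rho>')" using pos_ball t_pos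
    by (simp add: ennreal_zero_less_mult_iff)
  also have "\<dots> = (\<integral>\<^sup>+y. ennreal t * indicator (ball w \<rho>') y \<partial>lborel)"
    by (rule nn_integral_cmult_indicator[symmetric]) simp
  also have "\<dots> \<le> (\<integral>\<^sup>+y. ennreal (f y) * indicator (ball w \<rho>') y \<partial>lborel)"
  proof (rule nn_integral_mono)
    fix y show "ennreal t * indicator (ball w \<rho>') y \<le> ennreal (f y) * indicator (ball w \<rho>') y"
    proof (cases "y \<in> ball w \<rho>'")
      case True
      then have "t < f y" using \<rho>'(2) by auto
      then show ?thesis using True by (simp add: ennreal_leI)
    qed simp
  qed
  also have "\<dots> = emeasure M (X 0 -` ball w \<rho>' \<inter> space M)"
    by (rule distributed_emeasure[OF distr, symmetric]) simp
  also have "\<dots> \<le> emeasure M {\<omega> \<in> space M. X 0 \<omega> \<in> L \<inter> ball x \<rho>}"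
    by (rule emeasure_mono) (use sub in auto)
  also have "\<dots> = ennreal (prob {\<omega> \<in> space M. X 0 \<omega> \<in> L \<inter> ball x \<rho>})"
    by (rule emeasure_eq_measure)
  finally show ?thesis by simp
qed

lemma prob_ball_uniformly_positive:
  assumes rho: "\<rho> > 0"
  shows "\<exists>m>0. \<forall>x\<in>L. prob {\<omega> \<in> space M. X 0 \<omega> \<in> L \<inter> ball x \<rho>} \<ge> m"
proof -
  define q where "q x = prob {\<omega> \<in> space M. X 0 \<omega> \<in> L \<inter> ball x (\<rho> / 2)}" for x
  have cL: "compact L" using Lt_cpt unfolding L_def .
  have cover: "L \<subseteq> (\<Union>x\<in>L. ball x (\<rho> / 2))" using rho by auto
  obtain F where F: "F \<subseteq> L" "finite F" "L \<subseteq> (\<Union>x\<in>F. ball x (\<rho> / 2))"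
    by (rule compactE_image[OF cL, of L "\<lambda>x. ball x (\<rho> / 2)"]) (use cover in auto)
  have "L \<noteq> {}" using Lt_ne unfolding L_def .
  then have Fne: "F \<noteq> {}" using F(3) by auto
  define m where "m = Min (q ` F)"
  have qpos: "q y > 0" if "y \<in> F" for y
    unfolding q_def by (rule prob_ball_positive) (use F that rho in auto)
  have mpos: "m > 0"
    unfolding m_def by (subst Min_gr_iff) (use F Fne qpos in auto)
  have "prob {\<omega> \<in> space M. X 0 \<omega> \<in> L \<inter> ball x \<rho>} \<ge> m" if x: "x \<in> L" for x
  proof -
    obtain y where y: "y \<in> F" "x \<in> ball y (\<rho> / 2)" using F(3) x by auto
    have bsub: "ball y (\<rho> / 2) \<subseteq> ball x \<rho>"
    proof
      fix z assume "z \<in> ball y (\<rho> / 2)"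
      then have "dist y z < \<rho> / 2" by simp
      moreover have "dist x y < \<rho> / 2" using y(2) by (simp add: dist_commute)
      ultimately show "z \<in> ball x \<rho>" using dist_triangle[of x z y] by simp
    qed
    have "m \<le> q y" unfolding m_def using F(2) y(1) by simp
    also have "q y \<le> prob {\<omega> \<in> space M. X 0 \<omega> \<in> L \<inter> ball x \<rho>}"
      unfolding q_def by (rule finite_measure_mono) (use bsub in auto)
    finally show ?thesis .
  qed
  then show ?thesis using mpos by blast
qed

lemma p_pos: "p > 0"
proof -
  obtain x where x: "x \<in> L" using Lt_ne unfolding L_def by auto
  have "0 < prob {\<omega> \<in> space M. X 0 \<omega> \<in> L \<inter> ball x 1}" by (rule prob_ball_positive[OF x]) simp
  also have "\<dots> \<le> p" unfolding p_def by (rule finite_measure_mono) auto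
  finally show ?thesis .
qed

lemma misclassified_near_level:
  assumes close: "\<bar>fhat n \<omega> (X j \<omega>) - f (X j \<omega>)\<bar> \<le> \<delta>" and j: "j < n"
    and mis: "(j \<in> Jn fhat X t n \<omega>) \<noteq> (X j \<omega> \<in> L)"
  shows "\<bar>f (X j \<omega>) - t\<bar> \<le> \<delta>"
proof (cases "t \<le> fhat n \<omega> (X j \<omega>)")
  case True
  then have "f (X j \<omega>) < t" using j mis unfolding Jn_def L_def superlevel_def by auto
  then show ?thesis using True close by linarith
next
  case False
  then have "f (X j \<omega>) \<ge> t" using mis unfolding Jn_def L_def superlevel_def by auto
  then show ?thesis using False close by linarith
qed

lemma selected_mean_along_path:
  fixes fhat :: "nat \<Rightarrow> 'b \<Rightarrow> 'a \<Rightarrow> real" and \<epsilon> :: "nat \<Rightarrow> real"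
  assumes eps_lim: "\<epsilon> \<longlonglongrightarrow> 0"
    and close: "eventually (\<lambda>n. \<forall>x. \<bar>fhat n \<omega> x - f x\<bar> \<le> \<epsilon> n) sequentially"
    and band: "\<And>m. (\<lambda>n. (\<Sum>j<n. indicator (thin_band m) (X j \<omega>)) / real n)
      \<longlonglongrightarrow> prob {\<omega> \<in> space M. X 0 \<omega> \<in> thin_band m}"
    and freq: "(\<lambda>n. (\<Sum>j<n. indicator L (X j \<omega>)) / real n) \<longlonglongrightarrow> p"
    and mean: "(\<lambda>n. (\<Sum>j<n. indicator L (X j \<omega>) * g (X j \<omega>)) / real n)
      \<longlonglongrightarrow> expectation (\<lambda>\<omega>. indicator L (X 0 \<omega>) * g (X 0 \<omega>))"
    and gB: "\<And>y. \<bar>g y\<bar> \<le> B"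
  shows "(\<lambda>n. (\<Sum>j\<in>Jn fhat X t n \<omega>. g (X j \<omega>)) / real (card (Jn fhat X t n \<omega>)))
    \<longlonglongrightarrow> expectation (\<lambda>\<omega>. indicator L (X 0 \<omega>) * g (X 0 \<omega>)) / p"
proof (rule selection_mean_limit[where l="\<lambda>j. indicator L (X j \<omega>)"
      and bm="\<lambda>m j. indicator (thin_band m) (X j \<omega>)"
      and P="\<lambda>m. prob {\<omega> \<in> space M. X 0 \<omega> \<in> thin_band m}" and B=B])
  show "Jn fhat X t n \<omega> \<subseteq> {..<n}" for n unfolding Jn_def by auto
  show "\<bar>g (X j \<omega>)\<bar> \<le> B" for j by (rule gB)
  show "indicator L (X j \<omega>) = (0::real) \<or> indicator L (X j \<omega>) = (1::real)" for j
    by (simp add: indicator_def)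
  show "indicator (thin_band m) (X j \<omega>) \<ge> (0::real)" for m j
    by simp
  show "(\<lambda>m. prob {\<omega> \<in> space M. X 0 \<omega> \<in> thin_band m}) \<longlonglongrightarrow> 0" by (rule prob_thin_band_vanish)
  show "(\<lambda>n. (\<Sum>j<n. indicator (thin_band m) (X j \<omega>)) / real n) \<longlonglongrightarrow> prob {\<omega> \<in> space M. X 0 \<omega> \<in> thin_band m}" for m
    by (rule band)
  show "(\<lambda>n. (\<Sum>j<n. indicator L (X j \<omega>) * g (X j \<omega>)) / real n)
          \<longlonglongrightarrow> expectation (\<lambda>\<omega>. indicator L (X 0 \<omega>) * g (X 0 \<omega>))" by (rule mean)
  show "(\<lambda>n. (\<Sum>j<n. indicator L (X j \<omega>)) / real n) \<longlonglongrightarrow> p" by (rule freq)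
  show "p \<noteq> 0" using p_pos by simp
  fix m :: nat
  have "eventually (\<lambda>n. \<epsilon> n < 1 / real (Suc m)) sequentially"
    by (rule order_tendstoD(2)[OF eps_lim]) simp
  then show "eventually (\<lambda>n. \<forall>j<n. (j \<in> Jn fhat X t n \<omega>) \<noteq> (indicator L (X j \<omega>) = (1::real))
              \<longrightarrow> indicator (thin_band m) (X j \<omega>) = (1::real)) sequentially"
    using close
  proof eventually_elim
    case (elim n)
    have "X j \<omega> \<in> thin_band m"
      if "j < n" "(j \<in> Jn fhat X t n \<omega>) \<noteq> (X j \<omega> \<in> L)" for j
      using misclassified_near_level[OF _ that] elim unfolding thin_band_def by force
    then show ?case by (simp add: indicator_def)
  qed
qed

lemma selected_mean_pointwise:
  fixes fhat :: "nat \<Rightarrow> 'b \<Rightarrow> 'a \<Rightarrow> real" and \<epsilon> :: "nat \<Rightarrow> real"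
  assumes eps_lim: "\<epsilon> \<longlonglongrightarrow> 0"
    and fhat_close: "AE \<omega> in M. eventually (\<lambda>n. \<forall>x. \<bar>fhat n \<omega> x - f x\<bar> \<le> \<epsilon> n) sequentially"
    and g[measurable]: "g \<in> borel_measurable borel" and gB: "\<And>y. \<bar>g y\<bar> \<le> B"
  shows "AE \<omega> in M. (\<lambda>n. (\<Sum>j\<in>Jn fhat X t n \<omega>. g (X j \<omega>)) / real (card (Jn fhat X t n \<omega>)))
           \<longlonglongrightarrow> expectation (\<lambda>\<omega>. indicator L (X 0 \<omega>) * g (X 0 \<omega>)) / p"
proof -
  have ind_bd: "\<bar>indicator A y :: real\<bar> \<le> 1" for A y by (simp add: indicator_def)
  have A1: "AE \<omega> in M. \<forall>m. (\<lambda>n. (\<Sum>j<n. indicator (thin_band m) (X j \<omega>)) / real n)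
               \<longlonglongrightarrow> prob {\<omega> \<in> space M. X 0 \<omega> \<in> thin_band m}"
  proof (subst AE_all_countable, intro allI)
    fix m
    show "AE \<omega> in M. (\<lambda>n. (\<Sum>j<n. indicator (thin_band m) (X j \<omega>)) / real n) \<longlonglongrightarrow> prob {\<omega> \<in> space M. X 0 \<omega> \<in> thin_band m}"
      using slln_sample[of "indicator (thin_band m)" 1] ind_bd expectation_indicator[of "thin_band m"] by simp
  qed
  have A2: "AE \<omega> in M. (\<lambda>n. (\<Sum>j<n. indicator L (X j \<omega>)) / real n) \<longlonglongrightarrow> p"
    using slln_sample[of "indicator L" 1] ind_bd expectation_indicator[of L] unfolding p_def by simp
  have gB': "\<bar>indicator L y * g y\<bar> \<le> B" for y
    using gB[of y] order_trans[OF abs_ge_zero gB[of y]] by (simp add: indicator_def)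
  have A3: "AE \<omega> in M. (\<lambda>n. (\<Sum>j<n. indicator L (X j \<omega>) * g (X j \<omega>)) / real n)
              \<longlonglongrightarrow> expectation (\<lambda>\<omega>. indicator L (X 0 \<omega>) * g (X 0 \<omega>))"
    using slln_sample[of "\<lambda>y. indicator L y * g y" B] gB' by simp
  show ?thesis
    using A1 A2 A3 fhat_close
  proof eventually_elim
    case (elim \<omega>)
    show ?case
      by (rule selected_mean_along_path[where fhat=fhat and \<omega>=\<omega> and g=g and B=B,
            OF eps_lim elim(4) elim(1)[rule_format] elim(2) elim(3) gB])
  qed
qed

text \<open>The empirical object \<open>\<integral> \<psi>(y - z) P\<^sub>n\<^sup>t(dy)\<close> and its limit \<open>\<integral> \<psi>(y - z) \<mu>\<^sup>t(dy)\<close>;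
  the objects of the theorem are the case \<open>\<psi> = k\<^sub>h\<close>.\<close>

definition emp_mean :: "(nat \<Rightarrow> 'b \<Rightarrow> 'a \<Rightarrow> real) \<Rightarrow> ('a \<Rightarrow> real) \<Rightarrow> nat \<Rightarrow> 'b \<Rightarrow> 'a \<Rightarrow> real" where
  "emp_mean fhat \<psi> n \<omega> z =
     (\<Sum>j\<in>Jn fhat X t n \<omega>. \<psi> (X j \<omega> - z)) / real (card (Jn fhat X t n \<omega>))"

definition cond_mean :: "('a \<Rightarrow> real) \<Rightarrow> 'a \<Rightarrow> real" where
  "cond_mean \<psi> z = expectation (\<lambda>\<omega>. indicator L (X 0 \<omega>) * \<psi> (X 0 \<omega> - z)) / p"

lemma emp_mean_bound:
  fixes g :: "'a \<Rightarrow> real"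
  assumes gB: "\<And>y. \<bar>g y\<bar> \<le> B"
  shows "\<bar>emp_mean fhat g n \<omega> z\<bar> \<le> B"
proof -
  have B0: "B \<ge> 0" using order_trans[OF abs_ge_zero gB] .
  define J where "J = Jn fhat X t n \<omega>"
  have fin: "finite J" unfolding J_def Jn_def by simp
  show ?thesis
  proof (cases "J = {}")
    case True then show ?thesis using B0 unfolding emp_mean_def J_def[symmetric] by simp
  next
    case False
    then have c: "real (card J) > 0" using fin by (simp add: card_gt_0_iff)
    have "\<bar>\<Sum>j\<in>J. g (X j \<omega> - z)\<bar> \<le> (\<Sum>j\<in>J. B)"
      using gB by (intro order_trans[OF sum_abs] sum_mono) auto
    then have "\<bar>\<Sum>j\<in>J. g (X j \<omega> - z)\<bar> \<le> real (card J) * B" by simp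
    then show ?thesis using c unfolding emp_mean_def J_def[symmetric] by (simp add: abs_divide field_simps)
  qed
qed

lemma integrable_indicator_bounded:
  fixes g :: "'a \<Rightarrow> real"
  assumes [measurable]: "g \<in> borel_measurable borel" and gB: "\<And>y. \<bar>g y\<bar> \<le> B"
  shows "integrable M (\<lambda>\<omega>. indicator L (X 0 \<omega>) * g (X 0 \<omega>))"
  by (rule integrable_const_bound[where B=B])
     (auto intro!: AE_I2 simp: indicator_def gB order_trans[OF abs_ge_zero gB])

lemma cond_mean_bound:
  assumes [measurable]: "\<psi> \<in> borel_measurable borel" and bound: "\<And>y. \<bar>\<psi> y\<bar> \<le> B"
  shows "\<bar>cond_mean \<psi> z\<bar> \<le> B"
proof -
  have B: "B \<ge> 0" using order_trans[OF abs_ge_zero bound] .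
  have "\<bar>expectation (\<lambda>\<omega>. indicator L (X 0 \<omega>) * \<psi> (X 0 \<omega> - z))\<bar>
      \<le> expectation (\<lambda>\<omega>. \<bar>indicator L (X 0 \<omega>) * \<psi> (X 0 \<omega> - z)\<bar>)" by (rule integral_abs_bound)
  also have "\<dots> \<le> expectation (\<lambda>\<omega>. B * indicator L (X 0 \<omega>))"
  proof (rule integral_mono)
    show "integrable M (\<lambda>\<omega>. \<bar>indicator L (X 0 \<omega>) * \<psi> (X 0 \<omega> - z)\<bar>)"
      by (rule integrable_const_bound[where B=B]) (auto intro!: AE_I2 simp: indicator_def bound B)
    show "integrable M (\<lambda>\<omega>. B * indicator L (X 0 \<omega>))"
      by (rule integrable_const_bound[where B=B]) (auto intro!: AE_I2 simp: indicator_def B)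
    fix \<omega> show "\<bar>indicator L (X 0 \<omega>) * \<psi> (X 0 \<omega> - z)\<bar> \<le> B * indicator L (X 0 \<omega>)"
      using bound[of "X 0 \<omega> - z"] by (simp add: indicator_def)
  qed
  also have "\<dots> = B * p" using expectation_indicator[of L] unfolding p_def by simp
  finally show ?thesis using p_pos unfolding cond_mean_def by (simp add: abs_divide field_simps)
qed

lemma emp_mean_shift_close:
  assumes "\<And>j. j \<in> Jn fhat X t n \<omega> \<Longrightarrow> \<bar>\<psi> (X j \<omega> - z) - \<psi> (X j \<omega> - q)\<bar> \<le> e" and e: "e \<ge> 0"
  shows "\<bar>emp_mean fhat \<psi> n \<omega> z - emp_mean fhat \<psi> n \<omega> q\<bar> \<le> e"
proof -
  define J where "J = Jn fhat X t n \<omega>"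
  have fin: "finite J" unfolding J_def Jn_def by simp
  show ?thesis
  proof (cases "J = {}")
    case True then show ?thesis using e unfolding emp_mean_def J_def[symmetric] by simp
  next
    case False
    then have c: "real (card J) > 0" using fin by (simp add: card_gt_0_iff)
    have "\<bar>emp_mean fhat \<psi> n \<omega> z - emp_mean fhat \<psi> n \<omega> q\<bar> = \<bar>\<Sum>j\<in>J. \<psi> (X j \<omega> - z) - \<psi> (X j \<omega> - q)\<bar> / real (card J)"
      unfolding emp_mean_def J_def[symmetric] using c
      by (simp add: sum_subtractf diff_divide_distrib[symmetric] abs_divide)
    also have "\<dots> \<le> (\<Sum>j\<in>J. \<bar>\<psi> (X j \<omega> - z) - \<psi> (X j \<omega> - q)\<bar>) / real (card J)"
      using c by (intro divide_right_mono sum_abs) simp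
    also have "\<dots> \<le> (\<Sum>j\<in>J. e) / real (card J)"
      using c assms(1) unfolding J_def by (intro divide_right_mono sum_mono) auto
    also have "\<dots> = e" using c by simp
    finally show ?thesis .
  qed
qed

lemma cond_mean_shift_close:
  assumes psi[measurable]: "\<psi> \<in> borel_measurable borel" and psiB: "\<And>y. \<bar>\<psi> y\<bar> \<le> B"
    and close: "\<And>y. \<bar>\<psi> (y - z) - \<psi> (y - q)\<bar> \<le> e"
  shows "\<bar>cond_mean \<psi> z - cond_mean \<psi> q\<bar> \<le> e"
proof -
  have int: "integrable M (\<lambda>\<omega>. indicator L (X 0 \<omega>) * \<psi> (X 0 \<omega> - w))" for w
    by (rule integrable_indicator_bounded[of "\<lambda>y. \<psi> (y - w)" B]) (auto simp: psiB)
  have "cond_mean \<psi> z - cond_mean \<psi> q = cond_mean (\<lambda>u. \<psi> u - \<psi> (u + (z - q))) z"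
    unfolding cond_mean_def
    by (simp add: diff_divide_distrib[symmetric] Bochner_Integration.integral_diff[OF int int, symmetric]
        right_diff_distrib)
  also have "\<bar>\<dots>\<bar> \<le> e"
  proof (rule cond_mean_bound)
    show "(\<lambda>u. \<psi> u - \<psi> (u + (z - q))) \<in> borel_measurable borel" by measurable
    fix u show "\<bar>\<psi> u - \<psi> (u + (z - q))\<bar> \<le> e" using close[of "u + z"] by (simp add: algebra_simps)
  qed
  finally show ?thesis .
qed

lemma emp_mean_uniform:
  fixes fhat :: "nat \<Rightarrow> 'b \<Rightarrow> 'a \<Rightarrow> real" and \<epsilon> :: "nat \<Rightarrow> real"
  assumes eps_lim: "\<epsilon> \<longlonglongrightarrow> 0"
    and fhat_close: "AE \<omega> in M. eventually (\<lambda>n. \<forall>x. \<bar>fhat n \<omega> x - f x\<bar> \<le> \<epsilon> n) sequentially"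
    and psi_cont: "continuous_on UNIV \<psi>" and psi_uc: "uniformly_continuous_on UNIV \<psi>"
    and psiB: "\<And>y. \<bar>\<psi> y\<bar> \<le> B"
  shows "AE \<omega> in M. \<forall>C. compact C \<longrightarrow> (\<forall>e>0. eventually (\<lambda>n. \<forall>z\<in>C. \<bar>emp_mean fhat \<psi> n \<omega> z - cond_mean \<psi> z\<bar> \<le> e) sequentially)"
proof -
  have psim[measurable]: "\<psi> \<in> borel_measurable borel" by (rule borel_measurable_continuous_onI[OF psi_cont])
  obtain Q :: "'a set" where Q: "countable Q" "\<And>U. open U \<Longrightarrow> U \<noteq> {} \<Longrightarrow> \<exists>d\<in>Q. d \<in> U"
    using countable_dense_setE by auto
  have equi: "\<exists>\<delta>>0. \<forall>z q. dist z q < \<delta> \<longrightarrow>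
      (\<forall>n. \<bar>emp_mean fhat \<psi> n \<omega> z - emp_mean fhat \<psi> n \<omega> q\<bar> \<le> e) \<and> \<bar>cond_mean \<psi> z - cond_mean \<psi> q\<bar> \<le> e"
    if e: "e > 0" for e \<omega>
  proof -
    obtain \<delta> where \<delta>: "\<delta> > 0" "\<forall>x\<in>UNIV. \<forall>x'\<in>UNIV. dist x' x < \<delta> \<longrightarrow> dist (\<psi> x') (\<psi> x) < e"
      using psi_uc e unfolding uniformly_continuous_on_def by blast
    have close: "\<bar>\<psi> (y - z) - \<psi> (y - q)\<bar> \<le> e" if "dist z q < \<delta>" for y z q
    proof -
      have "dist (y - z) (y - q) < \<delta>" using that by (simp add: dist_norm norm_minus_commute)
      then show ?thesis using \<delta>(2) by (simp add: dist_real_def less_imp_le)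
    qed
    show ?thesis
      using emp_mean_shift_close close cond_mean_shift_close[OF psim psiB close] e \<delta>(1)
      by (meson less_imp_le)
  qed
  have "AE \<omega> in M. \<forall>q\<in>Q. (\<lambda>n. emp_mean fhat \<psi> n \<omega> q) \<longlonglongrightarrow> cond_mean \<psi> q"
  proof (rule AE_ball_countable')
    fix q assume "q \<in> Q"
    have gm: "(\<lambda>y. \<psi> (y - q)) \<in> borel_measurable borel" by measurable
    show "AE \<omega> in M. (\<lambda>n. emp_mean fhat \<psi> n \<omega> q) \<longlonglongrightarrow> cond_mean \<psi> q"
      using selected_mean_pointwise[OF eps_lim fhat_close gm psiB] unfolding emp_mean_def cond_mean_def .
  qed (rule Q(1))
  then show ?thesis
    by (rule AE_mp) (auto intro!: AE_I2 uniform_convergence_from_dense[OF Q(2) equi])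
qed

end

locale kernel_sample = iid_level_sample M X f Df t + smooth_kernel k
  for M :: "'b measure" and X :: "nat \<Rightarrow> 'b \<Rightarrow> 'a::euclidean_space" and f Df t and k :: "'a \<Rightarrow> real" +
  fixes h :: real
  assumes h_pos: "h > 0" and k_low: "\<exists>c>0. \<forall>x\<in>cball 0 (1/2). k x \<ge> c"
begin

text \<open>The partial derivatives of \<open>k\<^sub>h\<close>, scaled so that \<open>z \<mapsto> k\<^sub>h(y - z)\<close> has derivative
  \<open>v \<mapsto> - (\<Sum>b. (v \<bullet> b) dkh b (y - z))\<close>.\<close>

definition dkh :: "'a \<Rightarrow> 'a \<Rightarrow> real" where
  "dkh b u = Dk (u /\<^sub>R h) b / h"

lemma kh_cont: "continuous_on UNIV (kh k h)"
  unfolding kh_def by (intro continuous_on_compose2[OF k_cont] continuous_intros) auto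

lemma dkh_cont: "continuous_on UNIV (dkh b)"
  unfolding dkh_def using h_pos by (intro continuous_on_compose2[OF Dk_cont] continuous_intros) auto

lemma kh_measurable[measurable]: "kh k h \<in> borel_measurable borel"
  by (rule borel_measurable_continuous_onI[OF kh_cont])

lemma dkh_measurable[measurable]: "dkh b \<in> borel_measurable borel"
  by (rule borel_measurable_continuous_onI[OF dkh_cont])

lemma kh_uc: "uniformly_continuous_on UNIV (kh k h)"
  unfolding kh_def by (rule uniformly_continuous_on_rescale[OF k_uc])

lemma dkh_uc: "uniformly_continuous_on UNIV (dkh b)"
  unfolding dkh_def
  by (intro bounded_linear.uniformly_continuous_on[OF bounded_linear_divide]
      bounded_linear.uniformly_continuous_on[OF blinfun.bounded_linear_left]
      uniformly_continuous_on_rescale[OF Dk_uc])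

lemma kh_bounded: "\<exists>B. \<forall>u. \<bar>kh k h u\<bar> \<le> B"
  using k_bounded unfolding kh_def by blast

lemma dkh_bound:
  assumes B: "\<And>x. norm (Dk x) \<le> B"
  shows "\<bar>dkh b u\<bar> \<le> B * norm b / h"
proof -
  have "\<bar>Dk (u /\<^sub>R h) b\<bar> \<le> norm (Dk (u /\<^sub>R h)) * norm b" by (metis norm_blinfun real_norm_def)
  also have "\<dots> \<le> B * norm b" using B by (intro mult_right_mono) auto
  finally show ?thesis unfolding dkh_def using h_pos by (simp add: abs_divide divide_right_mono)
qed

lemma Kh_lim_eq: "Kh_lim M X f t k h z = cond_mean (kh k h) z"
  unfolding Kh_lim_def cond_mean_def kh_def L_def p_def by simp

lemma Knh_eq: "Knh fhat X t k h n \<omega> z = emp_mean fhat (kh k h) n \<omega> z"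
proof -
  have "(\<Sum>j\<in>Jn fhat X t n \<omega>. indicator (superlevel (fhat n \<omega>) t) (X j \<omega>) * kh k h (X j \<omega> - z))
      = (\<Sum>j\<in>Jn fhat X t n \<omega>. kh k h (X j \<omega> - z))"
    by (rule sum.cong) (auto simp: Jn_def superlevel_def kh_def)
  then show ?thesis unfolding Knh_def emp_mean_def by simp
qed

lemma kh_shift_deriv:
  "((\<lambda>z. kh k h (y - z)) has_derivative (\<lambda>v. - (\<Sum>b\<in>Basis. (v \<bullet> b) * dkh b (y - z)))) (at z)"
proof -
  have inner: "((\<lambda>z. (y - z) /\<^sub>R h) has_derivative (\<lambda>v. - (v /\<^sub>R h))) (at z)"
    by (auto intro!: derivative_eq_intros)
  have "((\<lambda>z. k ((y - z) /\<^sub>R h)) has_derivative (\<lambda>v. Dk ((y - z) /\<^sub>R h) (- (v /\<^sub>R h)))) (at z)"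
    by (rule has_derivative_compose[OF inner k_has_derivative])
  moreover have "Dk ((y - z) /\<^sub>R h) (- (v /\<^sub>R h)) = - (\<Sum>b\<in>Basis. (v \<bullet> b) * dkh b (y - z))" for v
  proof -
    have "Dk ((y - z) /\<^sub>R h) (- (v /\<^sub>R h)) = - Dk ((y - z) /\<^sub>R h) (v /\<^sub>R h)"
      by (simp add: blinfun.minus_right)
    also have "Dk ((y - z) /\<^sub>R h) (v /\<^sub>R h) = (\<Sum>b\<in>Basis. ((v /\<^sub>R h) \<bullet> b) * Dk ((y - z) /\<^sub>R h) b)"
      by (rule blinfun_basis_expansion)
    also have "\<dots> = (\<Sum>b\<in>Basis. (v \<bullet> b) * dkh b (y - z))"
      unfolding dkh_def by (rule sum.cong) (simp_all add: field_simps)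
    finally show ?thesis .
  qed
  ultimately show ?thesis unfolding kh_def by simp
qed

lemma emp_mean_deriv:
  "(emp_mean fhat (kh k h) n \<omega> has_derivative (\<lambda>v. - (\<Sum>b\<in>Basis. (v \<bullet> b) * emp_mean fhat (dkh b) n \<omega> z))) (at z)"
proof -
  define J where "J = Jn fhat X t n \<omega>"
  define c where "c = real (card J)"
  have "((\<lambda>z. \<Sum>j\<in>J. kh k h (X j \<omega> - z)) has_derivative
      (\<lambda>v. \<Sum>j\<in>J. - (\<Sum>b\<in>Basis. (v \<bullet> b) * dkh b (X j \<omega> - z)))) (at z)"
    by (rule has_derivative_sum) (rule kh_shift_deriv)
  then have "((\<lambda>z. (\<Sum>j\<in>J. kh k h (X j \<omega> - z)) / c) has_derivative
      (\<lambda>v. (\<Sum>j\<in>J. - (\<Sum>b\<in>Basis. (v \<bullet> b) * dkh b (X j \<omega> - z))) / c)) (at z)"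
    by (rule bounded_linear.has_derivative[OF bounded_linear_divide[of c]])
  moreover have "(\<Sum>j\<in>J. - (\<Sum>b\<in>Basis. (v \<bullet> b) * dkh b (X j \<omega> - z))) / c
      = - (\<Sum>b\<in>Basis. (v \<bullet> b) * ((\<Sum>j\<in>J. dkh b (X j \<omega> - z)) / c))" for v
    by (simp add: sum_negf sum_divide_distrib sum_distrib_left sum.swap[of _ J] mult.assoc)
  ultimately show ?thesis unfolding emp_mean_def J_def[symmetric] c_def[symmetric] by simp
qed

lemma integrable_kh: "integrable M (\<lambda>\<omega>. indicator L (X 0 \<omega>) * kh k h (X 0 \<omega> - w))"
proof -
  obtain B where "\<And>u. \<bar>kh k h u\<bar> \<le> B" using kh_bounded by blast
  then show ?thesis by (intro integrable_indicator_bounded[of _ B]) auto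
qed

lemma integrable_dkh: "integrable M (\<lambda>\<omega>. indicator L (X 0 \<omega>) * dkh b (X 0 \<omega> - w))"
proof -
  obtain B where "\<And>x. norm (Dk x) \<le> B" using Dk_bounded by blast
  then show ?thesis using dkh_bound by (intro integrable_indicator_bounded[of _ "B * norm b / h"]) auto
qed

lemma kh_first_order:
  assumes e: "e > 0"
  shows "\<exists>d>0. \<forall>v u. norm v < d \<longrightarrow>
    \<bar>kh k h (u - v) - kh k h u + (\<Sum>b\<in>Basis. (v \<bullet> b) * dkh b u)\<bar> \<le> e * norm v"
proof -
  obtain \<delta> where \<delta>: "\<delta> > 0" "\<And>w s. norm s < \<delta> \<Longrightarrow> \<bar>k (w + s) - k w - Dk w s\<bar> \<le> (e * h) * norm s"
    using k_first_order[of "e * h"] e h_pos by auto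
  have "\<bar>kh k h (u - v) - kh k h u + (\<Sum>b\<in>Basis. (v \<bullet> b) * dkh b u)\<bar> \<le> e * norm v"
    if v: "norm v < \<delta> * h" for u v :: 'a
  proof -
    define s where "s = - (v /\<^sub>R h)"
    have ns: "norm s = norm v / h" unfolding s_def using h_pos by (simp add: divide_inverse mult.commute)
    have "(\<Sum>b\<in>Basis. (v \<bullet> b) * dkh b u) = (\<Sum>b\<in>Basis. ((v /\<^sub>R h) \<bullet> b) * Dk (u /\<^sub>R h) b)"
      unfolding dkh_def by (rule sum.cong) (simp_all add: field_simps)
    also have "\<dots> = - Dk (u /\<^sub>R h) s"
      unfolding s_def blinfun_basis_expansion[symmetric] by (simp add: blinfun.minus_right)
    finally have "\<bar>kh k h (u - v) - kh k h u + (\<Sum>b\<in>Basis. (v \<bullet> b) * dkh b u)\<bar>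
        = \<bar>k (u /\<^sub>R h + s) - k (u /\<^sub>R h) - Dk (u /\<^sub>R h) s\<bar>"
      unfolding kh_def s_def by (simp add: algebra_simps)
    also have "\<dots> \<le> (e * h) * norm s"
      by (rule \<delta>(2)) (use v h_pos in \<open>simp add: ns divide_less_eq\<close>)
    also have "\<dots> = e * norm v" unfolding ns using h_pos by simp
    finally show ?thesis .
  qed
  moreover have "\<delta> * h > 0" using \<delta>(1) h_pos by simp
  ultimately show ?thesis by blast
qed

lemma cond_mean_remainder:
  "cond_mean (kh k h) (z + v) - cond_mean (kh k h) z + (\<Sum>b\<in>Basis. (v \<bullet> b) * cond_mean (dkh b) z)
   = cond_mean (\<lambda>u. kh k h (u - v) - kh k h u + (\<Sum>b\<in>Basis. (v \<bullet> b) * dkh b u)) z"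
proof -
  define I where "I \<psi> = expectation (\<lambda>\<omega>. indicator L (X 0 \<omega>) * \<psi> (X 0 \<omega>))" for \<psi> :: "'a \<Rightarrow> real"
  have "I (\<lambda>x. kh k h (x - z - v) - kh k h (x - z) + (\<Sum>b\<in>Basis. (v \<bullet> b) * dkh b (x - z)))
      = I (\<lambda>x. kh k h (x - z - v)) - I (\<lambda>x. kh k h (x - z))
        + (\<Sum>b\<in>Basis. (v \<bullet> b) * I (\<lambda>x. dkh b (x - z)))"
  proof -
    have "I (\<lambda>x. kh k h (x - z - v) - kh k h (x - z) + (\<Sum>b\<in>Basis. (v \<bullet> b) * dkh b (x - z)))
        = expectation (\<lambda>\<omega>. (indicator L (X 0 \<omega>) * kh k h (X 0 \<omega> - (z + v))
            - indicator L (X 0 \<omega>) * kh k h (X 0 \<omega> - z))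
          + (\<Sum>b\<in>Basis. (v \<bullet> b) * (indicator L (X 0 \<omega>) * dkh b (X 0 \<omega> - z))))"
      unfolding I_def
      by (rule Bochner_Integration.integral_cong) (simp_all add: algebra_simps sum_distrib_left)
    also have "\<dots> = (expectation (\<lambda>\<omega>. indicator L (X 0 \<omega>) * kh k h (X 0 \<omega> - (z + v)))
          - expectation (\<lambda>\<omega>. indicator L (X 0 \<omega>) * kh k h (X 0 \<omega> - z)))
        + (\<Sum>b\<in>Basis. expectation (\<lambda>\<omega>. (v \<bullet> b) * (indicator L (X 0 \<omega>) * dkh b (X 0 \<omega> - z))))"
      by (simp add: Bochner_Integration.integral_add Bochner_Integration.integrable_diff
          Bochner_Integration.integrable_sum Bochner_Integration.integral_diff
          Bochner_Integration.integral_sum integrable_kh integrable_dkh)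
    finally show ?thesis unfolding I_def by (simp add: diff_diff_eq)
  qed
  then show ?thesis
    unfolding cond_mean_def I_def
    by (simp add: diff_diff_eq add_divide_distrib diff_divide_distrib sum_divide_distrib)
qed

lemma cond_mean_deriv:
  "(cond_mean (kh k h) has_derivative (\<lambda>v. - (\<Sum>b\<in>Basis. (v \<bullet> b) * cond_mean (dkh b) z))) (at z)"
  unfolding has_derivative_at_alt
proof (intro conjI allI impI)
  show "bounded_linear (\<lambda>v. - (\<Sum>b\<in>Basis. (v \<bullet> b) * cond_mean (dkh b) z))"
    by (intro bounded_linear_minus bounded_linear_sum bounded_linear_mult_const bounded_linear_inner_left)
  fix e :: real assume "e > 0"
  then obtain d where d: "d > 0" "\<And>v u. norm v < d \<Longrightarrow>
      \<bar>kh k h (u - v) - kh k h u + (\<Sum>b\<in>Basis. (v \<bullet> b) * dkh b u)\<bar> \<le> e * norm v"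
    using kh_first_order by blast
  have "norm (cond_mean (kh k h) y - cond_mean (kh k h) z
      - - (\<Sum>b\<in>Basis. ((y - z) \<bullet> b) * cond_mean (dkh b) z)) \<le> e * norm (y - z)"
    if "norm (y - z) < d" for y
  proof -
    have "cond_mean (kh k h) y - cond_mean (kh k h) z - - (\<Sum>b\<in>Basis. ((y - z) \<bullet> b) * cond_mean (dkh b) z)
      = cond_mean (\<lambda>u. kh k h (u - (y - z)) - kh k h u + (\<Sum>b\<in>Basis. ((y - z) \<bullet> b) * dkh b u)) z"
      using cond_mean_remainder[of z "y - z"] by simp
    also have "\<bar>\<dots>\<bar> \<le> e * norm (y - z)"
      by (rule cond_mean_bound) (use d(2) that in auto)
    finally show ?thesis by simp
  qed
  then show "\<exists>d>0. \<forall>y. norm (y - z) < d \<longrightarrow> norm (cond_mean (kh k h) y - cond_mean (kh k h) z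
      - - (\<Sum>b\<in>Basis. ((y - z) \<bullet> b) * cond_mean (dkh b) z)) \<le> e * norm (y - z)"
    using d(1) by blast
qed

text \<open>The compact \<open>h/4\<close>-neighbourhood of \<open>L(t)\<close>, which contains \<open>\<phi>\<^sub>n(L(t))\<close> for large \<open>n\<close>.\<close>

definition L_nbhd :: "'a set" where
  "L_nbhd = {z. \<exists>x\<in>L. dist z x \<le> h / 4}"

lemma L_nbhd_compact: "compact L_nbhd"
proof -
  have "L_nbhd = {x + y | x y. x \<in> L \<and> y \<in> cball 0 (h / 4)}"
  proof
    show "L_nbhd \<subseteq> {x + y | x y. x \<in> L \<and> y \<in> cball 0 (h / 4)}"
    proof
      fix z assume "z \<in> L_nbhd"
      then obtain x where "x \<in> L" "dist z x \<le> h / 4" unfolding L_nbhd_def by blast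
      then have "z = x + (z - x) \<and> x \<in> L \<and> z - x \<in> cball 0 (h / 4)"
        by (simp add: dist_norm norm_minus_commute)
      then show "z \<in> {x + y | x y. x \<in> L \<and> y \<in> cball 0 (h / 4)}" by blast
    qed
    show "{x + y | x y. x \<in> L \<and> y \<in> cball 0 (h / 4)} \<subseteq> L_nbhd"
    proof
      fix z assume "z \<in> {x + y | x y. x \<in> L \<and> y \<in> cball 0 (h / 4)}"
      then obtain x y where "z = x + y" "x \<in> L" "y \<in> cball 0 (h / 4)" by blast
      then have "x \<in> L \<and> dist z x \<le> h / 4" by (simp add: dist_norm)
      then show "z \<in> L_nbhd" unfolding L_nbhd_def by blast
    qed
  qed
  then show ?thesis
    using compact_sums[OF Lt_cpt[folded L_def] compact_cball[of 0 "h / 4"]] by simp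
qed

text \<open>On this neighbourhood \<open>K\<^sub>h\<close> is bounded away from 0: each ball of radius \<open>h/4\<close>
  around a point of \<open>L(t)\<close> carries mass, and \<open>k\<^sub>h\<close> is bounded below on the ball of radius \<open>h/2\<close>.\<close>

lemma kh_lower_bound: "\<exists>c>0. \<forall>u. norm u < h / 2 \<longrightarrow> kh k h u \<ge> c"
proof -
  obtain c where c: "c > 0" "\<And>x. x \<in> cball 0 (1/2) \<Longrightarrow> k x \<ge> c" using k_low by blast
  have "kh k h u \<ge> c" if "norm u < h / 2" for u
  proof -
    have "norm (u /\<^sub>R h) = norm u / h" using h_pos by (simp add: divide_inverse mult.commute)
    then have "norm (u /\<^sub>R h) < 1 / 2" using that h_pos by (simp add: divide_less_eq)
    then show ?thesis using c(2) unfolding kh_def by simp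
  qed
  then show ?thesis using c(1) by blast
qed

lemma cond_mean_positive_near_L: "\<exists>c>0. \<forall>z\<in>L_nbhd. cond_mean (kh k h) z \<ge> c"
proof -
  obtain c0 where c0: "c0 > 0" "\<And>u. norm u < h / 2 \<Longrightarrow> kh k h u \<ge> c0"
    using kh_lower_bound by blast
  obtain m where m: "m > 0" "\<And>x. x \<in> L \<Longrightarrow> prob {\<omega> \<in> space M. X 0 \<omega> \<in> L \<inter> ball x (h / 4)} \<ge> m"
    using prob_ball_uniformly_positive[of "h / 4"] h_pos by auto
  have "cond_mean (kh k h) z \<ge> c0 * m / p" if "z \<in> L_nbhd" for z
  proof -
    obtain x where x: "x \<in> L" "dist z x \<le> h / 4" using \<open>z \<in> L_nbhd\<close> unfolding L_nbhd_def by blast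
    have bm[measurable]: "L \<inter> ball x (h / 4) \<in> sets borel" by simp
    have "c0 * m \<le> c0 * prob {\<omega> \<in> space M. X 0 \<omega> \<in> L \<inter> ball x (h / 4)}"
      using m(2)[OF x(1)] c0(1) by simp
    also have "\<dots> = expectation (\<lambda>\<omega>. c0 * indicator (L \<inter> ball x (h / 4)) (X 0 \<omega>))"
      using expectation_indicator[OF bm] by simp
    also have "\<dots> \<le> expectation (\<lambda>\<omega>. indicator L (X 0 \<omega>) * kh k h (X 0 \<omega> - z))"
    proof (rule integral_mono)
      show "integrable M (\<lambda>\<omega>. c0 * indicator (L \<inter> ball x (h / 4)) (X 0 \<omega>))"
        by (rule integrable_const_bound[where B="\<bar>c0\<bar>"]) (auto intro!: AE_I2 simp: indicator_def)
      show "integrable M (\<lambda>\<omega>. indicator L (X 0 \<omega>) * kh k h (X 0 \<omega> - z))" by (rule integrable_kh)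
      fix \<omega>
      show "c0 * indicator (L \<inter> ball x (h / 4)) (X 0 \<omega>) \<le> indicator L (X 0 \<omega>) * kh k h (X 0 \<omega> - z)"
      proof (cases "X 0 \<omega> \<in> L \<inter> ball x (h / 4)")
        case True
        then have "dist x (X 0 \<omega>) < h / 4" by simp
        then have "dist (X 0 \<omega>) z < h / 2" using x(2) dist_triangle[of "X 0 \<omega>" z x]
          by (simp add: dist_commute)
        then have "kh k h (X 0 \<omega> - z) \<ge> c0" using c0(2) by (simp add: dist_norm)
        then show ?thesis using True by simp
      next
        case False
        then show ?thesis using k_nonneg unfolding kh_def by (simp add: indicator_def)
      qed
    qed
    finally show ?thesis unfolding cond_mean_def using p_pos by (simp add: divide_right_mono)
  qed
  moreover have "c0 * m / p > 0" using c0(1) m(1) p_pos by simp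
  ultimately show ?thesis by blast
qed


lemma ratio_derivative_at_point:
  fixes fhat :: "nat \<Rightarrow> 'b \<Rightarrow> 'a \<Rightarrow> real" and c \<eta>0 \<eta>1 BD :: real
  assumes c: "c > 0" and K: "cond_mean (kh k h) z \<ge> c"
    and close0: "\<bar>emp_mean fhat (kh k h) n \<omega> z - cond_mean (kh k h) z\<bar> \<le> \<eta>0" and \<eta>0: "\<eta>0 \<le> c / 2"
    and close1: "\<And>b. b \<in> Basis \<Longrightarrow> \<bar>cond_mean (dkh b) z - emp_mean fhat (dkh b) n \<omega> z\<bar> \<le> \<eta>1"
    and BD: "\<And>y. norm (Dk y) \<le> BD"
  defines "\<Lambda> \<equiv> 2 * (real DIM('a) * \<eta>1) / c + 4 * \<eta>0 * (real DIM('a) * (BD / h)) / c\<^sup>2"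
  shows "\<exists>D. ((\<lambda>y. cond_mean (kh k h) y / emp_mean fhat (kh k h) n \<omega> y) has_derivative D) (at z)
      \<and> (\<forall>w. \<bar>D w\<bar> \<le> \<Lambda> * norm w)"
proof -
  define K where "K = cond_mean (kh k h) z"
  define Kn where "Kn = emp_mean fhat (kh k h) n \<omega> z"
  define S where "S = real DIM('a) * (BD / h)"
  have Kn_K: "\<bar>Kn - K\<bar> \<le> \<eta>0" using close0 unfolding Kn_def K_def .
  have Kn_low: "Kn \<ge> c / 2" using Kn_K K \<eta>0 unfolding K_def by linarith
  define D where "D w = ((- (\<Sum>b\<in>Basis. (w \<bullet> b) * cond_mean (dkh b) z)) * Kn
      - K * (- (\<Sum>b\<in>Basis. (w \<bullet> b) * emp_mean fhat (dkh b) n \<omega> z))) / (Kn * Kn)" for w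
  have "((\<lambda>y. cond_mean (kh k h) y / emp_mean fhat (kh k h) n \<omega> y) has_derivative D) (at z)"
    using has_derivative_divide'[OF cond_mean_deriv emp_mean_deriv] Kn_low c
    unfolding D_def K_def Kn_def by fastforce
  moreover have "\<bar>D w\<bar> \<le> \<Lambda> * norm w" for w
  proof -
    define A where "A = (\<Sum>b\<in>Basis. (w \<bullet> b) * cond_mean (dkh b) z)"
    define An where "An = (\<Sum>b\<in>Basis. (w \<bullet> b) * emp_mean fhat (dkh b) n \<omega> z)"
    have "\<bar>A - An\<bar> = \<bar>\<Sum>b\<in>Basis. (w \<bullet> b) * (cond_mean (dkh b) z - emp_mean fhat (dkh b) n \<omega> z)\<bar>"
      unfolding A_def An_def by (simp add: sum_subtractf right_diff_distrib)
    also have "\<dots> \<le> norm w * (real DIM('a) * \<eta>1)"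
      by (rule basis_sum_bound) (rule close1)
    finally have A_An: "\<bar>A - An\<bar> \<le> norm w * (real DIM('a) * \<eta>1)" .
    have "\<bar>emp_mean fhat (dkh b) n \<omega> z\<bar> \<le> BD / h" if "b \<in> Basis" for b
    proof (rule emp_mean_bound)
      fix y show "\<bar>dkh b y\<bar> \<le> BD / h" using dkh_bound[OF BD, of b y] that by simp
    qed
    then have An: "\<bar>An\<bar> \<le> norm w * S"
      unfolding An_def S_def by (rule basis_sum_bound)
    have "\<bar>D w\<bar> = \<bar>(- A * Kn - K * (- An)) / (Kn * Kn)\<bar>"
      unfolding D_def A_def An_def by simp
    also have "\<dots> \<le> 2 * (norm w * (real DIM('a) * \<eta>1)) / c + 4 * \<eta>0 * (norm w * S) / c\<^sup>2"
      by (rule quotient_derivative_bound[OF Kn_low c Kn_K A_An An])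
    also have "\<dots> = \<Lambda> * norm w"
      unfolding \<Lambda>_def S_def by (simp add: field_simps)
    finally show ?thesis .
  qed
  ultimately show ?thesis by blast
qed

lemma composed_ratio_derivative_bound:
  fixes \<psi> :: "'a \<Rightarrow> 'a" and fhat :: "nat \<Rightarrow> 'b \<Rightarrow> 'a \<Rightarrow> real" and c \<eta>0 \<eta>1 BD :: real
  assumes \<psi>: "(\<psi> has_derivative D\<psi>) (at x)" and D\<psi>: "onorm (\<lambda>v. D\<psi> v - v) \<le> 1"
    and c: "c > 0" and K: "cond_mean (kh k h) (\<psi> x) \<ge> c"
    and close0: "\<bar>emp_mean fhat (kh k h) n \<omega> (\<psi> x) - cond_mean (kh k h) (\<psi> x)\<bar> \<le> \<eta>0"
    and \<eta>0: "\<eta>0 \<le> c / 2"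
    and close1: "\<And>b. b \<in> Basis \<Longrightarrow>
      \<bar>cond_mean (dkh b) (\<psi> x) - emp_mean fhat (dkh b) n \<omega> (\<psi> x)\<bar> \<le> \<eta>1"
    and BD: "\<And>y. norm (Dk y) \<le> BD"
  defines "\<Lambda> \<equiv> 2 * (real DIM('a) * \<eta>1) / c + 4 * \<eta>0 * (real DIM('a) * (BD / h)) / c\<^sup>2"
  shows "\<exists>D. ((\<lambda>y. cond_mean (kh k h) (\<psi> y) / emp_mean fhat (kh k h) n \<omega> (\<psi> y)) has_derivative D) (at x)
      \<and> onorm D \<le> 2 * \<Lambda>"
proof -
  obtain D0 where D0: "((\<lambda>y. cond_mean (kh k h) y / emp_mean fhat (kh k h) n \<omega> y) has_derivative D0) (at (\<psi> x))"
    "\<And>w. \<bar>D0 w\<bar> \<le> \<Lambda> * norm w"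
    using ratio_derivative_at_point[OF c K close0 \<eta>0 close1 BD] unfolding \<Lambda>_def by blast
  obtain b0 :: 'a where "b0 \<in> Basis" using nonempty_Basis by blast
  then have "\<eta>1 \<ge> 0" using close1 by (meson abs_ge_zero order_trans)
  moreover have "\<eta>0 \<ge> 0" using close0 by (meson abs_ge_zero order_trans)
  moreover have "BD \<ge> 0" using BD[of 0] norm_ge_zero order_trans by blast
  ultimately have \<Lambda>: "\<Lambda> \<ge> 0" unfolding \<Lambda>_def using c h_pos by simp
  have Dv: "norm (D\<psi> v) \<le> 2 * norm v" for v
  proof -
    have "norm (D\<psi> v - v) \<le> onorm (\<lambda>v. D\<psi> v - v) * norm v"
      by (intro onorm bounded_linear_sub has_derivative_bounded_linear[OF \<psi>] bounded_linear_ident)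
    also have "\<dots> \<le> norm v" using mult_right_mono[OF D\<psi> norm_ge_zero[of v]] by simp
    finally show ?thesis using norm_triangle_ineq2[of "D\<psi> v" v] by linarith
  qed
  have "\<bar>D0 (D\<psi> v)\<bar> \<le> 2 * \<Lambda> * norm v" for v
    using D0(2)[of "D\<psi> v"] mult_left_mono[OF Dv[of v] \<Lambda>] by (simp add: mult_ac)
  then have "onorm (\<lambda>v. D0 (D\<psi> v)) \<le> 2 * \<Lambda>" by (intro onorm_le) simp
  moreover have "((\<lambda>y. cond_mean (kh k h) (\<psi> y) / emp_mean fhat (kh k h) n \<omega> (\<psi> y))
      has_derivative (\<lambda>v. D0 (D\<psi> v))) (at x)"
    using has_derivative_compose[OF \<psi> D0(1)] by (simp add: comp_def)
  ultimately show ?thesis by blast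
qed


lemma ratio_sup_close_to_one:
  fixes fhat :: "nat \<Rightarrow> 'b \<Rightarrow> 'a \<Rightarrow> real" and \<phi> :: "nat \<Rightarrow> 'a \<Rightarrow> 'a"
  assumes near: "eventually (\<lambda>n. \<forall>x\<in>L. \<phi> n x \<in> L_nbhd) sequentially"
    and conv: "\<And>\<eta>. \<eta> > 0 \<Longrightarrow> eventually (\<lambda>n. \<forall>z\<in>L_nbhd.
      \<bar>emp_mean fhat (kh k h) n \<omega> z - cond_mean (kh k h) z\<bar> \<le> \<eta>) sequentially"
    and e: "e > 0"
  shows "eventually (\<lambda>n. \<forall>x\<in>L.
    \<bar>cond_mean (kh k h) (\<phi> n x) / emp_mean fhat (kh k h) n \<omega> (\<phi> n x) - 1\<bar> \<le> e) sequentially"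
proof -
  obtain c where c: "c > 0" "\<And>z. z \<in> L_nbhd \<Longrightarrow> cond_mean (kh k h) z \<ge> c"
    using cond_mean_positive_near_L by blast
  define \<eta> where "\<eta> = min (c / 2) (c * e / 2)"
  have "\<eta> > 0" unfolding \<eta>_def using c e by simp
  have budget: "2 * \<eta> / c \<le> e" unfolding \<eta>_def using c e by (simp add: field_simps min_def)
  show ?thesis
    using conv[OF \<open>\<eta> > 0\<close>] near
  proof eventually_elim
    case (elim n)
    show ?case
    proof
      fix x assume "x \<in> L"
      then have z: "\<phi> n x \<in> L_nbhd" using elim(2) by blast
      have "\<bar>cond_mean (kh k h) (\<phi> n x) / emp_mean fhat (kh k h) n \<omega> (\<phi> n x) - 1\<bar> \<le> 2 * \<eta> / c"
        by (rule ratio_close_to_one[OF c(2)[OF z] c(1)]) (use elim(1) z \<eta>_def in auto)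
      then show "\<bar>cond_mean (kh k h) (\<phi> n x) / emp_mean fhat (kh k h) n \<omega> (\<phi> n x) - 1\<bar> \<le> e"
        using budget by linarith
    qed
  qed
qed

lemma ratio_sup_derivative_small:
  fixes fhat :: "nat \<Rightarrow> 'b \<Rightarrow> 'a \<Rightarrow> real" and \<phi> :: "nat \<Rightarrow> 'a \<Rightarrow> 'a"
  assumes \<phi>_deriv: "\<And>n x. (\<phi> n has_derivative frechet_derivative (\<phi> n) (at x)) (at x)"
    and near: "eventually (\<lambda>n. \<forall>x\<in>L. \<phi> n x \<in> L_nbhd) sequentially"
    and D_near: "eventually (\<lambda>n. \<forall>x\<in>L. onorm (\<lambda>v. frechet_derivative (\<phi> n) (at x) v - v) \<le> 1)
      sequentially"
    and conv: "\<And>\<eta>. \<eta> > 0 \<Longrightarrow> eventually (\<lambda>n. \<forall>z\<in>L_nbhd.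
      \<bar>emp_mean fhat (kh k h) n \<omega> z - cond_mean (kh k h) z\<bar> \<le> \<eta>) sequentially"
    and conv_D: "\<And>b \<eta>. b \<in> Basis \<Longrightarrow> \<eta> > 0 \<Longrightarrow> eventually (\<lambda>n. \<forall>z\<in>L_nbhd.
      \<bar>cond_mean (dkh b) z - emp_mean fhat (dkh b) n \<omega> z\<bar> \<le> \<eta>) sequentially"
    and e: "e > 0"
  shows "eventually (\<lambda>n. \<forall>x\<in>L. \<exists>D.
    ((\<lambda>y. cond_mean (kh k h) (\<phi> n y) / emp_mean fhat (kh k h) n \<omega> (\<phi> n y)) has_derivative D) (at x)
    \<and> onorm D \<le> e) sequentially"
proof -
  obtain c where c: "c > 0" "\<And>z. z \<in> L_nbhd \<Longrightarrow> cond_mean (kh k h) z \<ge> c"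
    using cond_mean_positive_near_L by blast
  obtain BD where BD: "\<And>y. norm (Dk y) \<le> BD" using Dk_bounded by blast
  define d where "d = real DIM('a)"
  define S where "S = d * (BD / h)"
  have d: "d > 0" unfolding d_def by simp
  have S: "S \<ge> 0"
    unfolding S_def using d h_pos BD[of 0] by (simp add: order_trans[OF norm_ge_zero])
  define \<eta>1 where "\<eta>1 = e * c / (8 * d)"
  define \<eta>0 where "\<eta>0 = min (c / 2) (e * c\<^sup>2 / (16 * (S + 1)))"
  have \<eta>1: "\<eta>1 > 0" unfolding \<eta>1_def using e c d by simp
  have \<eta>0: "\<eta>0 > 0" "\<eta>0 \<le> c / 2"
    unfolding \<eta>0_def using e c S by (simp_all only: min.cobounded1) simp
  have budget: "2 * (2 * (d * \<eta>1) / c + 4 * \<eta>0 * S / c\<^sup>2) \<le> e"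
    unfolding \<eta>1_def \<eta>0_def by (rule derivative_error_budget[OF c(1) e d S])
  have conv_D': "eventually (\<lambda>n. \<forall>b\<in>Basis. \<forall>z\<in>L_nbhd.
      \<bar>cond_mean (dkh b) z - emp_mean fhat (dkh b) n \<omega> z\<bar> \<le> \<eta>1) sequentially"
    using conv_D \<eta>1 by (intro eventually_ball_finite finite_Basis) blast
  show ?thesis
    using conv[OF \<eta>0(1)] conv_D' near D_near
  proof eventually_elim
    case (elim n)
    show ?case
    proof
      fix x assume "x \<in> L"
      then have z: "\<phi> n x \<in> L_nbhd" using elim(3) by blast
      obtain D where D: "((\<lambda>y. cond_mean (kh k h) (\<phi> n y) / emp_mean fhat (kh k h) n \<omega> (\<phi> n y))
          has_derivative D) (at x)" "onorm D \<le> 2 * (2 * (d * \<eta>1) / c + 4 * \<eta>0 * S / c\<^sup>2)"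
        using composed_ratio_derivative_bound[OF \<phi>_deriv _ c(1) c(2)[OF z] _ \<eta>0(2) _ BD, of fhat n \<omega> \<eta>1]
          elim \<open>x \<in> L\<close> z unfolding d_def S_def by blast
      then show "\<exists>D. ((\<lambda>y. cond_mean (kh k h) (\<phi> n y) / emp_mean fhat (kh k h) n \<omega> (\<phi> n y))
          has_derivative D) (at x) \<and> onorm D \<le> e"
        using budget by auto
    qed
  qed
qed

lemma ratio_uniform_convergence:
  fixes fhat :: "nat \<Rightarrow> 'b \<Rightarrow> 'a \<Rightarrow> real" and \<epsilon> :: "nat \<Rightarrow> real" and \<phi> :: "nat \<Rightarrow> 'a \<Rightarrow> 'a"
  assumes eps_lim: "\<epsilon> \<longlonglongrightarrow> 0"
    and fhat_close: "AE \<omega> in M. eventually (\<lambda>n. \<forall>x. \<bar>fhat n \<omega> x - f x\<bar> \<le> \<epsilon> n) sequentially"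
    and \<phi>_deriv: "\<And>n x. (\<phi> n has_derivative frechet_derivative (\<phi> n) (at x)) (at x)"
    and \<phi>_unif: "\<And>e. e > 0 \<Longrightarrow>
        eventually (\<lambda>n. \<forall>x\<in>superlevel f t. norm (\<phi> n x - x) \<le> e) sequentially"
    and \<phi>_D_unif: "\<And>e. e > 0 \<Longrightarrow>
        eventually (\<lambda>n. \<forall>x\<in>superlevel f t.
          onorm (\<lambda>v. frechet_derivative (\<phi> n) (at x) v - v) \<le> e) sequentially"
  shows "AE \<omega> in M.
     (\<forall>e>0. eventually (\<lambda>n. \<forall>x\<in>superlevel f t.
        \<bar>Kh_lim M X f t k h (\<phi> n x) / Knh fhat X t k h n \<omega> (\<phi> n x) - 1\<bar> \<le> e) sequentially) \<and>
     (\<forall>e>0. eventually (\<lambda>n. \<forall>x\<in>superlevel f t. \<exists>D.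
        ((\<lambda>y. Kh_lim M X f t k h (\<phi> n y) / Knh fhat X t k h n \<omega> (\<phi> n y)) has_derivative D) (at x)
        \<and> onorm D \<le> e) sequentially)"
proof -
  obtain B0 where B0: "\<And>u. \<bar>kh k h u\<bar> \<le> B0" using kh_bounded by blast
  obtain BD where BD: "\<And>y. norm (Dk y) \<le> BD" using Dk_bounded by blast
  have near: "eventually (\<lambda>n. \<forall>x\<in>L. \<phi> n x \<in> L_nbhd) sequentially"
    using \<phi>_unif[of "h / 4"] h_pos by (auto simp: L_def L_nbhd_def dist_norm elim!: eventually_mono)
  have D_near: "eventually (\<lambda>n. \<forall>x\<in>L. onorm (\<lambda>v. frechet_derivative (\<phi> n) (at x) v - v) \<le> 1)
      sequentially"
    using \<phi>_D_unif[of 1] by (simp add: L_def)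
  have "AE \<omega> in M. \<forall>C. compact C \<longrightarrow> (\<forall>\<eta>>0. eventually (\<lambda>n. \<forall>z\<in>C.
      \<bar>emp_mean fhat (kh k h) n \<omega> z - cond_mean (kh k h) z\<bar> \<le> \<eta>) sequentially)"
    by (rule emp_mean_uniform[OF eps_lim fhat_close kh_cont kh_uc B0])
  moreover have "AE \<omega> in M. \<forall>b\<in>Basis. \<forall>C. compact C \<longrightarrow> (\<forall>\<eta>>0. eventually (\<lambda>n. \<forall>z\<in>C.
      \<bar>emp_mean fhat (dkh b) n \<omega> z - cond_mean (dkh b) z\<bar> \<le> \<eta>) sequentially)"
    by (intro AE_finite_allI finite_Basis emp_mean_uniform[OF eps_lim fhat_close dkh_cont dkh_uc
          dkh_bound[OF BD]])
  ultimately show ?thesis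
  proof eventually_elim
    case (elim \<omega>)
    note conv = elim(1)[rule_format, OF L_nbhd_compact]
    have conv_D: "eventually (\<lambda>n. \<forall>z\<in>L_nbhd.
        \<bar>cond_mean (dkh b) z - emp_mean fhat (dkh b) n \<omega> z\<bar> \<le> \<eta>) sequentially"
      if "b \<in> Basis" "\<eta> > 0" for b \<eta>
      using elim(2) that L_nbhd_compact by (force simp: abs_minus_commute)
    show ?case
      unfolding Kh_lim_eq Knh_eq L_def[symmetric]
      using ratio_sup_close_to_one[OF near conv] ratio_sup_derivative_small[OF \<phi>_deriv near D_near conv conv_D]
      by blast
  qed
qed

end

theorem lemma5:
  fixes M :: "'b measure"
    and X :: "nat \<Rightarrow> 'b \<Rightarrow> 'a::euclidean_space"
    and f :: "'a \<Rightarrow> real"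
    and Df :: "'a \<Rightarrow> ('a \<Rightarrow>\<^sub>L real)"
    and D2f :: "'a \<Rightarrow> ('a \<Rightarrow>\<^sub>L 'a \<Rightarrow>\<^sub>L real)"
    and t h \<epsilon>0 :: real
    and k :: "'a \<Rightarrow> real"
    and \<epsilon> :: "nat \<Rightarrow> real"
    and \<phi> :: "nat \<Rightarrow> 'a \<Rightarrow> 'a"
    and fhat :: "nat \<Rightarrow> 'b \<Rightarrow> 'a \<Rightarrow> real"
  assumes P: "prob_space M"
    and indep: "prob_space.indep_vars M (\<lambda>_. borel) X UNIV"
    and dens_nonneg: "\<And>x. f x \<ge> 0"
    and distr: "\<And>i. distributed M lborel (X i) (\<lambda>x. ennreal (f x))"
    \<comment> \<open>level t\<close>
    and t_pos: "t > 0"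
    and t_int: "t \<in> interior (range f)"
    and Lt_ne: "superlevel f t \<noteq> {}"
    and Lt_cpt: "compact (superlevel f t)"
    \<comment> \<open>Assumption 1\<close>
    and f_D1: "\<And>x. (f has_derivative blinfun_apply (Df x)) (at x)"
    and f_D2: "\<And>x. (Df has_derivative blinfun_apply (D2f x)) (at x)"
    and f_D2_cont: "continuous_on UNIV D2f"
    and grad_pos: "\<And>x. f x = t \<Longrightarrow> norm (Df x) > 0"
    and f_bdd: "\<exists>B. \<forall>x. \<bar>f x\<bar> \<le> B \<and> norm (Df x) \<le> B \<and> norm (D2f x) \<le> B"
    \<comment> \<open>Assumption 2\<close>
    and k_nonneg: "\<And>x. k x \<ge> 0"
    and k_C2: "C2_fun k"
    and k_supp: "closure {x. k x \<noteq> 0} = cball 0 1"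
    and k_low: "\<exists>c>0. \<forall>x\<in>cball 0 (1/2). k x \<ge> c"
    and k_sym: "\<And>x. k (- x) = k x"
    \<comment> \<open>h and \<epsilon>0\<close>
    and h_pos: "h > 0"
    and eps0_pos: "\<epsilon>0 > 0"
    and no_crit: "\<And>x. x \<in> band f (t - \<epsilon>0) (t + \<epsilon>0) \<Longrightarrow> Df x \<noteq> 0"
    and eps0_alpha: "\<epsilon>0 / Inf ((\<lambda>x. norm (Df x)) ` band f (t - \<epsilon>0) t) < h / 2"
    \<comment> \<open>the sequence \<epsilon>_n\<close>
    and eps_pos: "\<And>n. 0 < \<epsilon> n"
    and eps_le: "\<And>n. \<epsilon> n \<le> \<epsilon>0"
    and eps_lim: "\<epsilon> \<longlonglongrightarrow> 0"
    \<comment> \<open>the diffeomorphisms \<phi>_n\<close>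
    and phi_diffeo: "\<And>n. C1_diffeo (\<phi> n)"
    and phi_img: "\<And>n. \<phi> n ` superlevel f t = superlevel f (t - \<epsilon> n)"
    and phi_unif: "\<And>e. e > 0 \<Longrightarrow>
        eventually (\<lambda>n. \<forall>x\<in>superlevel f t. norm (\<phi> n x - x) \<le> e) sequentially"
    and phi_D_unif: "\<And>e. e > 0 \<Longrightarrow>
        eventually (\<lambda>n. \<forall>x\<in>superlevel f t.
          onorm (\<lambda>v. frechet_derivative (\<phi> n) (at x) v - v) \<le> e) sequentially"
    \<comment> \<open>the estimator: built from X_1..X_n, measurable, differentiable\<close>
    and fhat_sample: "\<And>n \<omega> \<omega>'. (\<forall>i<n. X i \<omega> = X i \<omega>') \<Longrightarrow> fhat n \<omega> = fhat n \<omega>'"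
    and fhat_meas: "\<And>n x. (\<lambda>\<omega>. fhat n \<omega> x) \<in> borel_measurable M"
    and fhat_diff: "\<And>n \<omega> x. fhat n \<omega> differentiable (at x)"
    \<comment> \<open>indicator of \<Omega>_n tends to 1 almost surely\<close>
    and Omega_as: "AE \<omega> in M. eventually (\<lambda>n. Omega_n fhat f Df t \<epsilon>0 \<epsilon> n \<omega>) sequentially"
  shows "AE \<omega> in M.
     (\<forall>e>0. eventually (\<lambda>n. \<forall>x\<in>superlevel f t.
        \<bar>Kh_lim M X f t k h (\<phi> n x) / Knh fhat X t k h n \<omega> (\<phi> n x) - 1\<bar> \<le> e) sequentially) \<and>
     (\<forall>e>0. eventually (\<lambda>n. \<forall>x\<in>superlevel f t. \<exists>D.
        ((\<lambda>y. Kh_lim M X f t k h (\<phi> n y) / Knh fhat X t k h n \<omega> (\<phi> n y)) has_derivative D) (at x)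
        \<and> onorm D \<le> e) sequentially)"
proof -
  have Df_cont: "continuous_on UNIV Df"
    using f_D2 has_derivative_continuous continuous_at_imp_continuous_on by blast
  have "kernel_sample M X f Df t k h"
    unfolding kernel_sample_def kernel_sample_axioms_def iid_level_sample_def
      iid_level_sample_axioms_def smooth_kernel_def
    using P indep distr t_pos Lt_ne Lt_cpt f_D1 Df_cont grad_pos k_nonneg k_C2 k_supp h_pos k_low
    by blast
  then interpret kernel_sample M X f Df t k h .
  have fhat_close: "AE \<omega> in M. eventually (\<lambda>n. \<forall>x. \<bar>fhat n \<omega> x - f x\<bar> \<le> \<epsilon> n) sequentially"
    using Omega_as by (rule AE_mp) (auto intro!: AE_I2 elim!: eventually_mono simp: Omega_n_def)
  have phi_deriv: "(\<phi> n has_derivative frechet_derivative (\<phi> n) (at x)) (at x)" for n x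
    using phi_diffeo[of n] frechet_derivative_works
    unfolding C1_diffeo_def C1_fun_def differentiable_def by blast
  show ?thesis
    by (rule ratio_uniform_convergence[OF eps_lim fhat_close phi_deriv phi_unif phi_D_unif])
qed

end
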